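(* Let $n\ge3$, $K\ge1$, and $\underline a=(a_1,\dots,a_K)\in(\mathbb{C}^\times)^K$ with $a_k\neq a_j^{\pm1}$ for all $k\neq j$. If $a_1=-1$ and $a_k\neq1$ for every $k\ge2$, then the image of $\psi_{\underline a}$ is isomorphic to the direct sum of one copy of $so_{2n}$ and $K-1$ copies of $sl_{2n}$.
   Context: For $n\geq 3$, $M_n=(m_{i,j})$ is the $n\times n$ integer matrix with $m_{i,i}=2$, $m_{i,i+1}=m_{i+1,i}=-1$ ($1\le i\le n-1$), $m_{1,n}=m_{n,1}=1$, all other entries $0$. $\mathrm{gim}(M_n)$ is the complex Lie algebra generated by $e_i,f_i,h_i$ ($1\le i\le n$) with relations: (R1) $[h_i,e_j]=m_{i,j}e_j$, $[h_i,f_j]=-m_{i,j}f_j$, $[e_i,f_i]=h_i$ for all $i,j$; (R2) for $i\ne j$ with $m_{i,j}\le0$: $[e_i,f_j]=0=[f_i,e_j]$, $(\mathrm{ad}\,e_i)^{1-m_{i,j}}e_j=0=(\mathrm{ad}\,f_i)^{1-m_{i,j}}f_j$; (R3) for $i\ne j$ with $m_{i,j}>0$: $[e_i,e_j]=0=[f_i,f_j]$, $(\mathrm{ad}\,e_i)^{m_{i,j}+1}f_j=0=(\mathrm{ad}\,f_i)^{m_{i,j}+1}e_j$. For $a\in\mathbb{C}^\times$, $\psi_a:\mathrm{gim}(M_n)\to sl_{2n}$ is the Lie algebra homomorphism determined by $\psi_a(e_i)=E_{i,i+1}-E_{n+i+1,n+i}$, $\psi_a(f_i)=E_{i+1,i}-E_{n+i,n+i+1}$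 ($1\le i\le n-1$), $\psi_a(e_n)=E_{n,n+1}+a^{-1}E_{1,2n}$, $\psi_a(f_n)=E_{n+1,n}+aE_{2n,1}$, where $E_{i,j}$ are matrix units. For $\underline a=(a_1,\dots,a_K)$, $\psi_{\underline a}=\bigoplus_{k=1}^K\psi_{a_k}:\mathrm{gim}(M_n)\to sl_{2n}^{\oplus K}$, $x\mapsto(\psi_{a_1}(x),\dots,\psi_{a_K}(x))$. *)

theory Defs
  imports Complex_Main
begin

text \<open>Elements of sl_{2n}^{\<oplus>K} (and of subalgebras of gl_{2n}^K) are represented as
  functions x k r s = (r,s)-entry of the k-th component, with 1-based indices
  k \<in> {1..K}, r,s \<in> {1..2n}, and value 0 outside these ranges.\<close>

type_synonym tup = "nat \<Rightarrow> nat \<Rightarrow> nat \<Rightarrow> complex"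

definition matE :: "nat \<Rightarrow> nat \<Rightarrow> nat \<Rightarrow> nat \<Rightarrow> complex" where
  "matE p q = (\<lambda>r s. if r = p \<and> s = q then 1 else 0)"

definition psi_e :: "nat \<Rightarrow> complex \<Rightarrow> nat \<Rightarrow> nat \<Rightarrow> nat \<Rightarrow> complex" where
  "psi_e n a i = (if i < n
     then (\<lambda>r s. matE i (i+1) r s - matE (n+i+1) (n+i) r s)
     else (\<lambda>r s. matE n (n+1) r s + inverse a * matE 1 (2*n) r s))"

definition psi_f :: "nat \<Rightarrow> complex \<Rightarrow> nat \<Rightarrow> nat \<Rightarrow> nat \<Rightarrow> complex" where
  "psi_f n a i = (if i < n
     then (\<lambda>r s. matE (i+1) i r s - matE (n+i) (n+i+1) r s)
     else (\<lambda>r s. matE (n+1) n r s + a * matE (2*n) 1 r s))"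

definition tup_of :: "nat \<Rightarrow> (nat \<Rightarrow> nat \<Rightarrow> nat \<Rightarrow> complex) \<Rightarrow> tup" where
  "tup_of K g = (\<lambda>k r s. if k \<in> {1..K} then g k r s else 0)"

definition lie_br :: "nat \<Rightarrow> tup \<Rightarrow> tup \<Rightarrow> tup" where
  "lie_br N x y = (\<lambda>k r s. (\<Sum>l\<in>{1..N}. x k r l * y k l s - y k r l * x k l s))"

definition tadd :: "tup \<Rightarrow> tup \<Rightarrow> tup" where
  "tadd x y = (\<lambda>k r s. x k r s + y k r s)"

definition tsmul :: "complex \<Rightarrow> tup \<Rightarrow> tup" where
  "tsmul c x = (\<lambda>k r s. c * x k r s)"

inductive_set lie_gen :: "nat \<Rightarrow> tup set \<Rightarrow> tup set" for N S where
  gen: "x \<in> S \<Longrightarrow> x \<in> lie_gen N S"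
| zero: "(\<lambda>k r s. 0) \<in> lie_gen N S"
| add: "x \<in> lie_gen N S \<Longrightarrow> y \<in> lie_gen N S \<Longrightarrow> tadd x y \<in> lie_gen N S"
| smul: "x \<in> lie_gen N S \<Longrightarrow> tsmul c x \<in> lie_gen N S"
| br: "x \<in> lie_gen N S \<Longrightarrow> y \<in> lie_gen N S \<Longrightarrow> lie_br N x y \<in> lie_gen N S"

definition psiA_e :: "nat \<Rightarrow> nat \<Rightarrow> (nat \<Rightarrow> complex) \<Rightarrow> nat \<Rightarrow> tup" where
  "psiA_e n K a i = tup_of K (\<lambda>k. psi_e n (a k) i)"

definition psiA_f :: "nat \<Rightarrow> nat \<Rightarrow> (nat \<Rightarrow> complex) \<Rightarrow> nat \<Rightarrow> tup" where
  "psiA_f n K a i = tup_of K (\<lambda>k. psi_f n (a k) i)"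

text \<open>Image of psi_a: since gim(M_n) is generated by e_i, f_i, h_i and psi_a is a
  Lie algebra homomorphism, its image is the Lie subalgebra generated by the images
  of the generators (with psi_a(h_i) = [psi_a(e_i), psi_a(f_i)]).\<close>
definition psi_image :: "nat \<Rightarrow> nat \<Rightarrow> (nat \<Rightarrow> complex) \<Rightarrow> tup set" where
  "psi_image n K a = lie_gen (2*n)
     ((psiA_e n K a ` {1..n}) \<union> (psiA_f n K a ` {1..n})
      \<union> ((\<lambda>i. lie_br (2*n) (psiA_e n K a i) (psiA_f n K a i)) ` {1..n}))"

definition so_sl_sum :: "nat \<Rightarrow> nat \<Rightarrow> tup set" where
  "so_sl_sum n K = {x.
     (\<forall>k r s. x k r s \<noteq> 0 \<longrightarrow> k \<in> {1..K} \<and> r \<in> {1..2*n} \<and> s \<in> {1..2*n})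
     \<and> (\<forall>r s. x 1 s r = - x 1 r s)
     \<and> (\<forall>k\<in>{2..K}. (\<Sum>r\<in>{1..2*n}. x k r r) = 0)}"

definition lie_iso :: "nat \<Rightarrow> tup set \<Rightarrow> tup set \<Rightarrow> bool" where
  "lie_iso N A B = (\<exists>\<phi>. bij_betw \<phi> A B \<and>
     (\<forall>x\<in>A. \<forall>y\<in>A. \<phi> (tadd x y) = tadd (\<phi> x) (\<phi> y)
        \<and> \<phi> (lie_br N x y) = lie_br N (\<phi> x) (\<phi> y))
     \<and> (\<forall>x\<in>A. \<forall>c. \<phi> (tsmul c x) = tsmul c (\<phi> x)))"

end

theory Submission
  imports Defs "HOL-Library.Function_Algebras"
begin

text \<open>Brackets of generators give the tuple whose k-th component is
  (2 + a_k + a_k^{-1}) (E_{11} - E_{n+1,n+1}), and the generators with i = 1 and i = n are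
  eigenvectors of its adjoint action with eigenvalue \<plusminus>(2 + a_k + a_k^{-1}) in component k.
  As a_k \<noteq> a_j^{\<plusminus>1}, these eigenvalues are pairwise distinct, so G contains each such
  generator concentrated in a single component; bracketing then recovers all generators
  componentwise, and G is the direct sum of the algebras generated in the single components.
  For a_k \<notin> {0, 1, -1} a component generates sl_{2n}. For a_1 = -1 the generators lie in,
  and generate, the orthogonal algebra of the form [[0, I], [I, 0]], which conjugation by
  [[I, iI], [I, -iI]] identifies with so_{2n}.\<close>

section \<open>Commutators of matrices indexed from 1\<close>

type_synonym mat = "nat \<Rightarrow> nat \<Rightarrow> complex"

definition mat_br :: "nat \<Rightarrow> mat \<Rightarrow> mat \<Rightarrow> mat" where
  "mat_br N X Y = (\<lambda>r s. \<Sum>l\<in>{1..N}. X r l * Y l s - Y r l * X l s)"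

definition mat_scale :: "complex \<Rightarrow> mat \<Rightarrow> mat" where
  "mat_scale c X = (\<lambda>r s. c * X r s)"


lemma mat_scale_0 [simp]: "mat_scale 0 X = 0" by (rule ext)+ (simp add: mat_scale_def)
lemma mat_scale_1 [simp]: "mat_scale 1 X = X" by (rule ext)+ (simp add: mat_scale_def)
lemma mat_scale_zero [simp]: "mat_scale c 0 = 0" by (rule ext)+ (simp add: mat_scale_def)
lemma mat_scale_minus_1: "mat_scale (-1) X = - X" by (rule ext)+ (simp add: mat_scale_def)
lemma mat_scale_uminus: "mat_scale c (- X) = - mat_scale c X" by (rule ext)+ (simp add: mat_scale_def)
lemma mat_scale_add: "mat_scale c (X + Y) = mat_scale c X + mat_scale c Y"
  by (rule ext)+ (simp add: mat_scale_def algebra_simps)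
lemma mat_scale_diff: "mat_scale c (X - Y) = mat_scale c X - mat_scale c Y"
  by (rule ext)+ (simp add: mat_scale_def algebra_simps)
lemma mat_scale_scale: "mat_scale c (mat_scale d X) = mat_scale (c * d) X"
  by (rule ext)+ (simp add: mat_scale_def)
lemma mat_scale_add_left: "mat_scale c X + mat_scale d X = mat_scale (c + d) X"
  by (rule ext)+ (simp add: mat_scale_def algebra_simps)
lemma mat_scale_diff_left: "mat_scale c X - mat_scale d X = mat_scale (c - d) X"
  by (rule ext)+ (simp add: mat_scale_def algebra_simps)
lemma mat_scale_self_add_left: "X + mat_scale c X = mat_scale (1 + c) X"
  by (rule ext)+ (simp add: mat_scale_def algebra_simps)
lemma mat_scale_self_add_right: "mat_scale c X + X = mat_scale (c + 1) X"
  by (rule ext)+ (simp add: mat_scale_def algebra_simps)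
lemma mat_scale_self_diff_left: "X - mat_scale c X = mat_scale (1 - c) X"
  by (rule ext)+ (simp add: mat_scale_def algebra_simps)
lemma mat_scale_self_diff_right: "mat_scale c X - X = mat_scale (c - 1) X"
  by (rule ext)+ (simp add: mat_scale_def algebra_simps)
lemma mat_scale_sum_left: "(\<Sum>p\<in>A. mat_scale (f p) Y) = mat_scale (\<Sum>p\<in>A. f p) Y"
  by (induction A rule: infinite_finite_induct) (simp_all add: mat_scale_add_left)

lemma mat_br_add_left: "mat_br N (X + Y) Z = mat_br N X Z + mat_br N Y Z"
  by (rule ext)+ (simp add: mat_br_def sum.distrib[symmetric] algebra_simps)
lemma mat_br_add_right: "mat_br N Z (X + Y) = mat_br N Z X + mat_br N Z Y"
  by (rule ext)+ (simp add: mat_br_def sum.distrib[symmetric] algebra_simps)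
lemma mat_br_diff_left: "mat_br N (X - Y) Z = mat_br N X Z - mat_br N Y Z"
  by (rule ext)+ (simp add: mat_br_def sum_subtractf[symmetric] algebra_simps)
lemma mat_br_diff_right: "mat_br N Z (X - Y) = mat_br N Z X - mat_br N Z Y"
  by (rule ext)+ (simp add: mat_br_def sum_subtractf[symmetric] algebra_simps)
lemma mat_br_uminus_left: "mat_br N (- X) Z = - mat_br N X Z"
  by (rule ext)+ (simp add: mat_br_def sum_negf[symmetric])
lemma mat_br_uminus_right: "mat_br N Z (- X) = - mat_br N Z X"
  by (rule ext)+ (simp add: mat_br_def sum_negf[symmetric])
lemma mat_br_scale_left: "mat_br N (mat_scale c X) Z = mat_scale c (mat_br N X Z)"
  by (rule ext)+ (simp add: mat_br_def mat_scale_def sum_distrib_left algebra_simps)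
lemma mat_br_scale_right: "mat_br N Z (mat_scale c X) = mat_scale c (mat_br N Z X)"
  by (rule ext)+ (simp add: mat_br_def mat_scale_def sum_distrib_left algebra_simps)
lemma mat_br_zero_left: "mat_br N 0 Z = 0" by (rule ext)+ (simp add: mat_br_def)
lemma mat_br_zero_right: "mat_br N Z 0 = 0" by (rule ext)+ (simp add: mat_br_def)

lemma sum_matE_mult:
  "(\<Sum>l\<in>{1..N}. matE p q r l * matE u v l s) = (if q = u \<and> u \<in> {1..N} then matE p v r s else 0)"
proof -
  have "(\<Sum>l\<in>{1..N}. matE p q r l * matE u v l s)
      = (\<Sum>l\<in>{1..N}. if l = q then (if r = p \<and> q = u \<and> s = v then 1 else 0) else 0)"
    by (rule sum.cong) (auto simp: matE_def)
  then show ?thesis by (auto simp: matE_def)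
qed

lemma mat_br_matE: "mat_br N (matE p q) (matE u v) =
   (if q = u \<and> u \<in> {1..N} then matE p v else 0) - (if v = p \<and> p \<in> {1..N} then matE u q else 0)"
  unfolding mat_br_def sum_subtractf sum_matE_mult by (rule ext)+ simp

lemmas mat_br_simps = mat_br_add_left mat_br_add_right mat_br_diff_left mat_br_diff_right
  mat_br_uminus_left mat_br_uminus_right mat_br_scale_left mat_br_scale_right
  mat_br_zero_left mat_br_zero_right mat_br_matE
  mat_scale_minus_1 mat_scale_uminus mat_scale_add_left mat_scale_diff_left
  mat_scale_self_add_left mat_scale_self_add_right mat_scale_self_diff_left mat_scale_self_diff_right

definition mat_lie_subalg :: "nat \<Rightarrow> mat set \<Rightarrow> bool" where
  "mat_lie_subalg N M \<longleftrightarrow> 0 \<in> M \<and> (\<forall>X\<in>M. \<forall>Y\<in>M. X + Y \<in> M)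
     \<and> (\<forall>X\<in>M. \<forall>c. mat_scale c X \<in> M)
     \<and> (\<forall>X\<in>M. \<forall>Y\<in>M. mat_br N X Y \<in> M)"

context
  fixes N :: nat and M :: "mat set"
  assumes subalg: "mat_lie_subalg N M"
begin

lemma subalg_zero: "0 \<in> M"
  and subalg_add: "X \<in> M \<Longrightarrow> Y \<in> M \<Longrightarrow> X + Y \<in> M"
  and subalg_scale: "X \<in> M \<Longrightarrow> mat_scale c X \<in> M"
  and subalg_br: "X \<in> M \<Longrightarrow> Y \<in> M \<Longrightarrow> mat_br N X Y \<in> M"
  using subalg unfolding mat_lie_subalg_def by auto

lemma subalg_uminus: "X \<in> M \<Longrightarrow> - X \<in> M"
  using subalg_scale[of X "-1"] by (simp add: mat_scale_minus_1)

lemma subalg_diff: "X \<in> M \<Longrightarrow> Y \<in> M \<Longrightarrow> X - Y \<in> M"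
  using subalg_add[of X "- Y"] subalg_uminus[of Y] by simp

lemma subalg_sum: "finite A \<Longrightarrow> (\<And>i. i \<in> A \<Longrightarrow> f i \<in> M) \<Longrightarrow> (\<Sum>i\<in>A. f i) \<in> M"
  by (induction A rule: finite_induct) (auto intro: subalg_zero subalg_add)

lemma subalg_scale_cancel: "mat_scale c X \<in> M \<Longrightarrow> c \<noteq> 0 \<Longrightarrow> X \<in> M"
  using subalg_scale[of "mat_scale c X" "inverse c"] by (simp add: mat_scale_scale)

lemma subalg_eigen_split:
  assumes s: "X1 + X2 \<in> M" and D: "D \<in> M"
    and e1: "mat_br N D X1 = mat_scale l1 X1" and e2: "mat_br N D X2 = mat_scale l2 X2"
    and l: "l1 \<noteq> l2"
  shows "X1 \<in> M" "X2 \<in> M"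
proof -
  have "mat_br N D (X1 + X2) - mat_scale l2 (X1 + X2) \<in> M"
    using s D by (intro subalg_diff subalg_br subalg_scale)
  also have "mat_br N D (X1 + X2) - mat_scale l2 (X1 + X2) = mat_scale (l1 - l2) X1"
    by (simp add: mat_br_add_right e1 e2 mat_scale_add mat_scale_diff_left[symmetric])
  finally show "X1 \<in> M" using l subalg_scale_cancel by auto
  then have "(X1 + X2) - X1 \<in> M" using s subalg_diff by blast
  then show "X2 \<in> M" by simp
qed

lemma subalg_eigen_split_diff:
  assumes s: "X1 - X2 \<in> M" and D: "D \<in> M"
    and e1: "mat_br N D X1 = mat_scale l1 X1" and e2: "mat_br N D X2 = mat_scale l2 X2"
    and l: "l1 \<noteq> l2"
  shows "X1 \<in> M" "X2 \<in> M"
proof -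
  have e2': "mat_br N D (- X2) = mat_scale l2 (- X2)"
    using e2 by (simp add: mat_br_uminus_right mat_scale_uminus)
  show "X1 \<in> M" using subalg_eigen_split(1)[of X1 "- X2", OF _ D e1 e2' l] s by simp
  have "- X2 \<in> M" using subalg_eigen_split(2)[of X1 "- X2", OF _ D e1 e2' l] s by simp
  then show "X2 \<in> M" using subalg_uminus by fastforce
qed

lemma subalg_of_adjacent_chain:
  fixes E :: "nat \<Rightarrow> nat \<Rightarrow> mat" and m :: nat
  assumes adj: "\<And>j. 1 \<le> j \<Longrightarrow> j < m \<Longrightarrow> E j (j+1) \<in> M \<and> E (j+1) j \<in> M"
    and chain: "\<And>p q r. p \<in> {1..m} \<Longrightarrow> q \<in> {1..m} \<Longrightarrow> r \<in> {1..m} \<Longrightarrow>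
        p \<noteq> q \<Longrightarrow> q \<noteq> r \<Longrightarrow> p \<noteq> r \<Longrightarrow> mat_br N (E p q) (E q r) = E p r"
    and pq: "p \<in> {1..m}" "q \<in> {1..m}" "p \<noteq> q"
  shows "E p q \<in> M"
proof -
  have up: "E p (p+d+1) \<in> M" if "1 \<le> p" "p + d + 1 \<le> m" for p d
    using that
  proof (induction d)
    case 0 then show ?case using adj[of p] by simp
  next
    case (Suc d)
    have "mat_br N (E p (p+d+1)) (E (p+d+1) (p+d+2)) \<in> M"
      using Suc adj[of "p+d+1"] by (intro subalg_br) auto
    then show ?case using Suc.prems chain[of p "p+d+1" "p+d+2"] by simp
  qed
  have down: "E (q+d+1) q \<in> M" if "1 \<le> q" "q + d + 1 \<le> m" for q d
    using that
  proof (induction d)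
    case 0 then show ?case using adj[of q] by simp
  next
    case (Suc d)
    have "mat_br N (E (q+d+2) (q+d+1)) (E (q+d+1) q) \<in> M"
      using Suc adj[of "q+d+1"] by (intro subalg_br) auto
    then show ?case using Suc.prems chain[of "q+d+2" "q+d+1" q] by simp
  qed
  show ?thesis
  proof (cases "p < q")
    case True
    then obtain d where "q = p + d + 1"
      by (metis add.commute add_Suc less_imp_Suc_add plus_1_eq_Suc)
    then show ?thesis using up[of p d] pq by simp
  next
    case False
    then have "q < p" using pq by simp
    then obtain d where "p = q + d + 1"
      by (metis add.commute add_Suc less_imp_Suc_add plus_1_eq_Suc)
    then show ?thesis using down[of q d] pq by simp
  qed
qed

end

section \<open>Subalgebras containing the images of the generators\<close>

lemma matE_br_chain:
  "p \<noteq> r \<Longrightarrow> q \<in> {1..N} \<Longrightarrow> mat_br N (matE p q) (matE q r) = matE p r"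
  by (simp add: mat_br_matE)

text \<open>blockE n p q is the image of E_pq under X \<mapsto> diag(X, -X^T); for i < n these are the
  values of psi at e_i and f_i.\<close>

definition blockE :: "nat \<Rightarrow> nat \<Rightarrow> nat \<Rightarrow> mat" where
  "blockE n p q = matE p q - matE (n+q) (n+p)"

lemma blockE_br_chain:
  assumes "p \<in> {1..n}" "q \<in> {1..n}" "r \<in> {1..n}" "p \<noteq> q" "q \<noteq> r" "p \<noteq> r"
  shows "mat_br (2*n) (blockE n p q) (blockE n q r) = blockE n p r"
  using assms by (simp add: blockE_def mat_br_simps)

lemma psi_e_less: "i < n \<Longrightarrow> psi_e n b i = blockE n i (i+1)"
  by (rule ext)+ (simp add: psi_e_def blockE_def)
lemma psi_f_less: "i < n \<Longrightarrow> psi_f n b i = blockE n (i+1) i"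
  by (rule ext)+ (simp add: psi_f_def blockE_def)
lemma psi_e_last: "psi_e n b n = matE n (n+1) + mat_scale (inverse b) (matE 1 (2*n))"
  by (rule ext)+ (simp add: psi_e_def mat_scale_def)
lemma psi_f_last: "psi_f n b n = matE (n+1) n + mat_scale b (matE (2*n) 1)"
  by (rule ext)+ (simp add: psi_f_def mat_scale_def)

lemma subalg_blockE_mem:
  assumes M: "mat_lie_subalg (2*n) M"
    and adj: "\<And>i. 1 \<le> i \<Longrightarrow> i < n \<Longrightarrow> blockE n i (i+1) \<in> M \<and> blockE n (i+1) i \<in> M"
    and pq: "p \<in> {1..n}" "q \<in> {1..n}" "p \<noteq> q"
  shows "blockE n p q \<in> M"
  by (rule subalg_of_adjacent_chain[where E = "blockE n" and m = n, OF M adj blockE_br_chain pq])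

lemma br_blockE_psi_e_last:
  "2 \<le> n \<Longrightarrow> mat_br (2*n) (blockE n 1 n) (psi_e n b n) = mat_scale (1 + inverse b) (matE 1 (n+1))"
  by (simp add: blockE_def psi_e_last mat_br_simps)

lemma br_psi_f_last_blockE:
  "2 \<le> n \<Longrightarrow> mat_br (2*n) (psi_f n b n) (blockE n n 1) = mat_scale (1 + b) (matE (n+1) 1)"
  by (simp add: blockE_def psi_f_last mat_br_simps)

locale psi_closed =
  fixes n :: nat and b :: complex and M :: "mat set"
  assumes subalg: "mat_lie_subalg (2*n) M" and n3: "3 \<le> n"
    and psi_e_mem: "\<And>i. i \<in> {1..n} \<Longrightarrow> psi_e n b i \<in> M"
    and psi_f_mem: "\<And>i. i \<in> {1..n} \<Longrightarrow> psi_f n b i \<in> M"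
begin

lemma blockE_mem:
  assumes "p \<in> {1..n}" "q \<in> {1..n}" "p \<noteq> q"
  shows "blockE n p q \<in> M"
proof (rule subalg_blockE_mem[OF subalg _ assms])
  fix i assume "1 \<le> i" "i < n"
  then show "blockE n i (i+1) \<in> M \<and> blockE n (i+1) i \<in> M"
    using psi_e_mem[of i] psi_f_mem[of i] by (simp add: psi_e_less psi_f_less)
qed

end

locale psi_closed_generic = psi_closed +
  assumes b_nonzero: "b \<noteq> 0" and b_ne_1: "b \<noteq> 1" and b_ne_minus_1: "b \<noteq> -1"
begin

lemma corner_matE_mem:
  "matE 1 (2*n) \<in> M" "matE (2*n) 1 \<in> M" "matE n (n+1) \<in> M" "matE (n+1) n \<in> M"
proof -
  note br = subalg_br[OF subalg] and cancel = subalg_scale_cancel[OF subalg]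
    and diff = subalg_diff[OF subalg]
  have B1n: "blockE n 1 n \<in> M" and Bn1: "blockE n n 1 \<in> M" using blockE_mem n3 by auto
  have e: "psi_e n b n \<in> M" and f: "psi_f n b n \<in> M" using psi_e_mem psi_f_mem n3 by auto
  have "mat_scale (1 + inverse b) (matE 1 (n+1)) \<in> M"
    using br[OF B1n e] br_blockE_psi_e_last[of n b] n3 by simp
  moreover have "1 + inverse b \<noteq> 0"
    using b_ne_minus_1
    by (metis add.inverse_inverse eq_neg_iff_add_eq_0 inverse_minus_eq inverse_1 inverse_inverse_eq)
  ultimately have E1: "matE 1 (n+1) \<in> M" by (rule cancel)
  have "mat_scale (1 + b) (matE (n+1) 1) \<in> M"
    using br[OF f Bn1] br_psi_f_last_blockE[of n b] n3 by simp
  moreover have "1 + b \<noteq> 0" using b_ne_minus_1 by (metis add.commute add_eq_0_iff)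
  ultimately have E2: "matE (n+1) 1 \<in> M" by (rule cancel)
  \<comment> \<open>the corners of psi(e_n), psi(f_n) with coefficient 1 instead of b^{-1} and b\<close>
  have Z: "matE n (n+1) + matE 1 (2*n) \<in> M"
    using br[OF Bn1 E1] n3 by (simp add: blockE_def mat_br_simps mult_2)
  have Z': "matE (n+1) n + matE (2*n) 1 \<in> M"
    using br[OF E2 B1n] n3 by (simp add: blockE_def mat_br_simps mult_2)
  have "mat_scale (inverse b - 1) (matE 1 (2*n)) \<in> M"
    using diff[OF e Z] by (simp add: psi_e_last mat_br_simps)
  moreover have "inverse b - 1 \<noteq> 0" using b_ne_1 by auto
  ultimately show E3: "matE 1 (2*n) \<in> M" by (rule cancel)
  have "mat_scale (b - 1) (matE (2*n) 1) \<in> M"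
    using diff[OF f Z'] by (simp add: psi_f_last mat_br_simps)
  moreover have "b - 1 \<noteq> 0" using b_ne_1 by auto
  ultimately show E4: "matE (2*n) 1 \<in> M" by (rule cancel)
  show "matE n (n+1) \<in> M" using diff[OF Z E3] by simp
  show "matE (n+1) n \<in> M" using diff[OF Z' E4] by simp
qed


lemma blockE_split:
  assumes B: "blockE n p q \<in> M" and D: "D \<in> M"
    and e1: "mat_br (2*n) D (matE p q) = mat_scale l (matE p q)"
    and e2: "mat_br (2*n) D (matE (n+q) (n+p)) = 0" and l: "l \<noteq> 0"
  shows "matE p q \<in> M" "matE (n+q) (n+p) \<in> M"
  using subalg_eigen_split_diff[OF subalg, of "matE p q" "matE (n+q) (n+p)" D l 0] B D e1 e2 l
  by (simp_all add: blockE_def)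

text \<open>Walking along the diagonal: the diagonal element [E_{j,j+1}, E_{j+1,j}] separates the two
  halves of blockE n (j+1) (j+2); the walk starts from [E_{1,2n}, E_{2n,1}].\<close>

lemma adjacent_matE_mem_halves:
  "d + 1 < n \<Longrightarrow> matE (d+1) (d+2) \<in> M \<and> matE (d+2) (d+1) \<in> M
     \<and> matE (n+d+2) (n+d+1) \<in> M \<and> matE (n+d+1) (n+d+2) \<in> M"
proof (induction d)
  case 0
  have "mat_br (2*n) (matE 1 (2*n)) (matE (2*n) 1) \<in> M"
    using corner_matE_mem by (intro subalg_br[OF subalg])
  then have D: "matE 1 1 - matE (2*n) (2*n) \<in> M" using n3 by (simp add: mat_br_simps)
  have B12: "blockE n 1 2 \<in> M" and B21: "blockE n 2 1 \<in> M" using blockE_mem n3 by auto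
  show ?case
    using blockE_split[OF B12 D, of 1] blockE_split[OF B21 D, of "-1"] n3
    by (simp_all add: mat_br_simps numeral_eq_Suc)
next
  case (Suc d)
  then have IH: "matE (d+1) (d+2) \<in> M" "matE (d+2) (d+1) \<in> M" by auto
  have "mat_br (2*n) (matE (d+1) (d+2)) (matE (d+2) (d+1)) \<in> M"
    using IH by (intro subalg_br[OF subalg])
  then have D: "matE (d+1) (d+1) - matE (d+2) (d+2) \<in> M" using Suc.prems by (simp add: mat_br_simps)
  have B: "blockE n (d+2) (d+3) \<in> M" "blockE n (d+3) (d+2) \<in> M"
    using blockE_mem Suc.prems by auto
  show ?case
    using blockE_split[OF B(1) D, of "-1"] blockE_split[OF B(2) D, of 1] Suc.prems
    by (simp_all add: mat_br_simps numeral_eq_Suc)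
qed

lemma adjacent_matE_mem:
  assumes "1 \<le> j" "j < 2*n"
  shows "matE j (j+1) \<in> M \<and> matE (j+1) j \<in> M"
proof -
  consider "j < n" | "j = n" | "n < j" by arith
  then show ?thesis
  proof cases
    case 1 then show ?thesis using adjacent_matE_mem_halves[of "j-1"] assms by simp
  next
    case 2 then show ?thesis using corner_matE_mem by simp
  next
    case 3
    then have "n + (j - n - 1) + 1 = j" "n + (j - n - 1) + 2 = j + 1" "j - n - 1 + 1 < n"
      using assms by auto
    then show ?thesis using adjacent_matE_mem_halves[of "j-n-1"] by metis
  qed
qed

lemma matE_mem: "p \<in> {1..2*n} \<Longrightarrow> q \<in> {1..2*n} \<Longrightarrow> p \<noteq> q \<Longrightarrow> matE p q \<in> M"
  by (rule subalg_of_adjacent_chain[where E = matE, OF subalg adjacent_matE_mem])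
    (auto simp: matE_br_chain)

end

section \<open>The orthogonal case\<close>

text \<open>The matrices skewE n p q span the orthogonal Lie algebra of the symmetric form with Gram
  matrix [[0, I], [I, 0]], i.e. the X with X (half_swap n s) (half_swap n r) = - X r s.\<close>

definition half_swap :: "nat \<Rightarrow> nat \<Rightarrow> nat" where
  "half_swap n j = (if j \<le> n then n + j else j - n)"

definition skewE :: "nat \<Rightarrow> nat \<Rightarrow> nat \<Rightarrow> mat" where
  "skewE n p q = matE p q - matE (half_swap n q) (half_swap n p)"

lemma half_swap_low: "j \<le> n \<Longrightarrow> half_swap n j = n + j"
  by (simp add: half_swap_def)
lemma half_swap_high: "1 \<le> j \<Longrightarrow> half_swap n (n + j) = j"
  by (simp add: half_swap_def)

lemma skewE_low_low: "p \<le> n \<Longrightarrow> q \<le> n \<Longrightarrow> skewE n p q = blockE n p q"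
  by (simp add: skewE_def blockE_def half_swap_low)
lemma skewE_high_high: "1 \<le> p \<Longrightarrow> 1 \<le> q \<Longrightarrow> skewE n (n+p) (n+q) = - blockE n q p"
  by (simp add: skewE_def blockE_def half_swap_high)

locale psi_closed_orth = psi_closed n "-1" M for n M
begin

lemma psi_last_orth:
  "psi_e n (-1) n = matE n (n+1) - matE 1 (2*n)" "psi_f n (-1) n = matE (n+1) n - matE (2*n) 1"
  by (simp_all add: psi_e_last psi_f_last mat_br_simps)

lemma blockE_diag_mem:
  assumes p: "p \<in> {1..n}"
  shows "blockE n p p \<in> M"
proof -
  note br = subalg_br[OF subalg]
  have diff: "blockE n p p - blockE n q q \<in> M" if "p \<in> {1..n}" "q \<in> {1..n}" "p \<noteq> q" for p q
  proof -
    have "mat_br (2*n) (blockE n p q) (blockE n q p) \<in> M"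
      using blockE_mem that by (intro br) auto
    then show ?thesis using that by (simp add: blockE_def mat_br_simps algebra_simps)
  qed
  have "mat_br (2*n) (psi_e n (-1) n) (psi_f n (-1) n) \<in> M"
    using psi_e_mem psi_f_mem n3 by (intro br) auto
  then have sum: "blockE n 1 1 + blockE n n n \<in> M"
    using n3 by (simp add: psi_last_orth blockE_def mat_br_simps mult_2) (simp add: algebra_simps)
  have "(blockE n 1 1 + blockE n n n) + (blockE n 1 1 - blockE n n n) \<in> M"
    using subalg_add[OF subalg sum diff[of 1 n]] n3 by simp
  moreover have "(blockE n 1 1 + blockE n n n) + (blockE n 1 1 - blockE n n n) = mat_scale 2 (blockE n 1 1)"
    by (rule ext)+ (simp add: mat_scale_def)
  ultimately have B11: "blockE n 1 1 \<in> M" using subalg_scale_cancel[OF subalg] by fastforce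
  show ?thesis
  proof (cases "p = 1")
    case False
    have "blockE n 1 1 - (blockE n 1 1 - blockE n p p) \<in> M"
      using subalg_diff[OF subalg B11 diff[of 1 p]] p False by simp
    then show ?thesis by simp
  qed (use B11 in simp)
qed

lemma skewE_low_high_mem:
  assumes p: "p \<in> {1..n}" and l: "l \<in> {1..n}"
  shows "skewE n p (n+l) \<in> M"
proof -
  note br = subalg_br[OF subalg]
  have eN: "skewE n n (n+1) \<in> M"
    using psi_e_mem[of n] n3 by (simp add: skewE_def half_swap_def psi_last_orth mult_2)
  have col1: "skewE n p (n+1) \<in> M" if p: "p \<in> {1..n}" for p
  proof (cases "p = n")
    case False
    have "mat_br (2*n) (blockE n p n) (skewE n n (n+1)) \<in> M"
      using blockE_mem[of p n] eN p False n3 by (intro br) auto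
    then show ?thesis
      using p False n3 by (simp add: skewE_def half_swap_def blockE_def mat_br_simps)
  qed (use eN in simp)
  consider "l = 1" | "p = 1" "l \<noteq> 1" | "p \<noteq> 1" "l \<noteq> 1" by blast
  then show ?thesis
  proof cases
    case 2
    have "- skewE n l (n+1) \<in> M" using col1 l by (intro subalg_uminus[OF subalg]) auto
    then show ?thesis using 2 l by (simp add: skewE_def half_swap_def)
  next
    case 3
    have "mat_br (2*n) (blockE n l 1) (skewE n p (n+1)) \<in> M"
      using blockE_mem[of l 1] col1 p l 3 by (intro br) auto
    then show ?thesis using p l 3 by (auto simp: skewE_def half_swap_def blockE_def mat_br_simps)
  qed (use col1 p in simp)
qed

lemma skewE_high_low_mem:
  assumes p: "p \<in> {1..n}" and l: "l \<in> {1..n}"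
  shows "skewE n (n+l) p \<in> M"
proof -
  note br = subalg_br[OF subalg]
  have fN: "skewE n (n+1) n \<in> M"
    using psi_f_mem[of n] n3 by (simp add: skewE_def half_swap_def psi_last_orth mult_2)
  have row1: "skewE n (n+1) p \<in> M" if p: "p \<in> {1..n}" for p
  proof (cases "p = n")
    case False
    have "mat_br (2*n) (skewE n (n+1) n) (blockE n n p) \<in> M"
      using blockE_mem[of n p] fN p False n3 by (intro br) auto
    then show ?thesis
      using p False n3 by (simp add: skewE_def half_swap_def blockE_def mat_br_simps)
  qed (use fN in simp)
  consider "l = 1" | "p = 1" "l \<noteq> 1" | "p \<noteq> 1" "l \<noteq> 1" by blast
  then show ?thesis
  proof cases
    case 2
    have "- skewE n (n+1) l \<in> M" using row1 l by (intro subalg_uminus[OF subalg]) auto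
    then show ?thesis using 2 l by (simp add: skewE_def half_swap_def)
  next
    case 3
    have "mat_br (2*n) (skewE n (n+1) p) (blockE n 1 l) \<in> M"
      using blockE_mem[of 1 l] row1 p l 3 by (intro br) auto
    then show ?thesis using p l 3 by (auto simp: skewE_def half_swap_def blockE_def mat_br_simps)
  qed (use row1 p in simp)
qed

lemma skewE_mem:
  assumes p: "p \<in> {1..2*n}" and q: "q \<in> {1..2*n}"
  shows "skewE n p q \<in> M"
proof -
  have low_low: "skewE n p q \<in> M" if "p \<in> {1..n}" "q \<in> {1..n}" for p q
    using that blockE_mem blockE_diag_mem by (cases "p = q") (auto simp: skewE_low_low)
  consider "p \<le> n" "q \<le> n" | "p \<le> n" "n < q" | "n < p" "q \<le> n" | "n < p" "n < q" by arith
  then show ?thesis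
  proof cases
    case 1 then show ?thesis using low_low p q by simp
  next
    case 2
    then have "q - n \<in> {1..n}" using q by auto
    then show ?thesis using skewE_low_high_mem[of p "q-n"] p 2 by simp
  next
    case 3
    then have "p - n \<in> {1..n}" using p by auto
    then show ?thesis using skewE_high_low_mem[of q "p-n"] q 3 by simp
  next
    case 4
    then have pq': "p - n \<in> {1..n}" "q - n \<in> {1..n}" using p q by auto
    have "skewE n p q = - skewE n (q-n) (p-n)"
      using 4 skewE_high_high[of "p-n" "q-n" n] skewE_low_low[of "q-n" n "p-n"] pq' by simp
    then show ?thesis using subalg_uminus[OF subalg low_low[OF pq'(2,1)]] by simp
  qed
qed

end

section \<open>Expansion in elementary matrices\<close>

definition mat_supported :: "nat \<Rightarrow> mat \<Rightarrow> bool" where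
  "mat_supported N X \<longleftrightarrow> (\<forall>r s. X r s \<noteq> 0 \<longrightarrow> r \<in> {1..N} \<and> s \<in> {1..N})"

definition half_swap_skew :: "nat \<Rightarrow> mat \<Rightarrow> bool" where
  "half_swap_skew n X \<longleftrightarrow>
     (\<forall>r\<in>{1..2*n}. \<forall>s\<in>{1..2*n}. X (half_swap n s) (half_swap n r) = - X r s)"

lemma half_swap_half_swap: "j \<in> {1..2*n} \<Longrightarrow> half_swap n (half_swap n j) = j"
  by (auto simp: half_swap_def)
lemma half_swap_bij: "bij_betw (half_swap n) {1..2*n} {1..2*n}"
  by (rule bij_betw_byWitness[where f' = "half_swap n"]) (auto simp: half_swap_def)

lemma sum_fun_apply: "(\<Sum>i\<in>A. f i) x = (\<Sum>i\<in>A. f i x)"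
  by (induction A rule: infinite_finite_induct) auto

lemma mat_expand_matE:
  assumes X: "mat_supported N X"
  shows "(\<Sum>p\<in>{1..N}. \<Sum>q\<in>{1..N}. mat_scale (X p q) (matE p q)) = X"
proof (rule ext)+
  fix r s
  have "(\<Sum>p\<in>{1..N}. \<Sum>q\<in>{1..N}. mat_scale (X p q) (matE p q)) r s
      = (\<Sum>p\<in>{1..N}. if p = r then (\<Sum>q\<in>{1..N}. if q = s then X r q else 0) else 0)"
    unfolding sum_fun_apply
    by (intro sum.cong refl)
      (auto simp: mat_scale_def matE_def mult.commute[of "X _ _"] if_distrib[of "\<lambda>x. x * _"]
        cong: if_cong intro!: sum.neutral)
  also have "\<dots> = X r s" using X by (cases "X r s = 0") (auto simp: mat_supported_def)
  finally show "(\<Sum>p\<in>{1..N}. \<Sum>q\<in>{1..N}. mat_scale (X p q) (matE p q)) r s = X r s" .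
qed

lemma subalg_traceless_mem:
  assumes M: "mat_lie_subalg N M"
    and E: "\<And>p q. p \<in> {1..N} \<Longrightarrow> q \<in> {1..N} \<Longrightarrow> p \<noteq> q \<Longrightarrow> matE p q \<in> M"
    and X: "mat_supported N X" and tr: "(\<Sum>r\<in>{1..N}. X r r) = 0"
  shows "X \<in> M"
proof -
  define F where "F p q = (if p = q then matE p p - matE N N else matE p q)" for p q
  have F: "F p q \<in> M" if "p \<in> {1..N}" "q \<in> {1..N}" for p q
  proof (cases "p = q \<and> p \<noteq> N")
    case True
    have "mat_br N (matE p N) (matE N p) \<in> M"
      using E that True by (intro subalg_br[OF M]) auto
    then show ?thesis using True that by (simp add: F_def mat_br_simps)
  qed (use E that subalg_zero[OF M] in \<open>auto simp: F_def\<close>)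
  have "mat_scale (X p q) (F p q)
      = mat_scale (X p q) (matE p q) - (if p = q then mat_scale (X p p) (matE N N) else 0)" for p q
    by (simp add: F_def mat_scale_diff)
  then have "(\<Sum>p\<in>{1..N}. \<Sum>q\<in>{1..N}. mat_scale (X p q) (F p q))
      = X - (\<Sum>p\<in>{1..N}. mat_scale (X p p) (matE N N))"
    using mat_expand_matE[OF X] by (simp add: sum_subtractf)
  also have "\<dots> = X" using tr by (simp add: mat_scale_sum_left)
  finally have "(\<Sum>p\<in>{1..N}. \<Sum>q\<in>{1..N}. mat_scale (X p q) (F p q)) = X" .
  moreover have "(\<Sum>p\<in>{1..N}. \<Sum>q\<in>{1..N}. mat_scale (X p q) (F p q)) \<in> M"
    using F by (intro subalg_sum[OF M] subalg_scale[OF M]) auto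
  ultimately show ?thesis by simp
qed

lemma subalg_half_swap_skew_mem:
  assumes M: "mat_lie_subalg (2*n) M"
    and S: "\<And>p q. p \<in> {1..2*n} \<Longrightarrow> q \<in> {1..2*n} \<Longrightarrow> skewE n p q \<in> M"
    and X: "mat_supported (2*n) X" and skew: "half_swap_skew n X"
  shows "X \<in> M"
proof -
  let ?R = "{1..2*n}"
  let ?h = "half_swap n"
  have "(\<Sum>p\<in>?R. \<Sum>q\<in>?R. mat_scale (X p q) (matE (?h q) (?h p)))
      = (\<Sum>p\<in>?R. \<Sum>q\<in>?R. mat_scale (X (?h p) (?h q)) (matE q p))"
    by (subst sum.reindex_bij_betw[OF half_swap_bij, symmetric],
        subst (2) sum.reindex_bij_betw[OF half_swap_bij, symmetric])
      (intro sum.cong refl, simp add: half_swap_half_swap)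
  also have "\<dots> = (\<Sum>q\<in>?R. \<Sum>p\<in>?R. mat_scale ((- X) q p) (matE q p))"
    using skew unfolding half_swap_skew_def by (subst sum.swap) (intro sum.cong refl; simp)
  also have "\<dots> = - X"
    using X by (intro mat_expand_matE) (auto simp: mat_supported_def)
  finally have neg: "(\<Sum>p\<in>?R. \<Sum>q\<in>?R. mat_scale (X p q) (matE (?h q) (?h p))) = - X" .
  have "(\<Sum>p\<in>?R. \<Sum>q\<in>?R. mat_scale (X p q) (skewE n p q))
      = (\<Sum>p\<in>?R. \<Sum>q\<in>?R. mat_scale (X p q) (matE p q))
        - (\<Sum>p\<in>?R. \<Sum>q\<in>?R. mat_scale (X p q) (matE (?h q) (?h p)))"
    by (simp add: skewE_def mat_scale_diff sum_subtractf)
  also have "\<dots> = mat_scale 2 X"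
    using mat_expand_matE[OF X] neg by (simp add: mat_scale_def fun_eq_iff)
  finally have "(\<Sum>p\<in>?R. \<Sum>q\<in>?R. mat_scale (X p q) (skewE n p q)) = mat_scale 2 X" .
  moreover have "(\<Sum>p\<in>?R. \<Sum>q\<in>?R. mat_scale (X p q) (skewE n p q)) \<in> M"
    using S by (intro subalg_sum[OF M] subalg_scale[OF M]) auto
  ultimately show ?thesis using subalg_scale_cancel[OF M] by fastforce
qed

lemma tadd_eq_plus: "tadd x y = x + y"
  by (rule ext)+ (simp add: tadd_def)

lemma tadd_apply: "tadd x y k = x k + y k"
  by (rule ext)+ (simp add: tadd_def)
lemma tsmul_apply: "tsmul c x k = mat_scale c (x k)"
  by (rule ext)+ (simp add: tsmul_def mat_scale_def)
lemma lie_br_apply: "lie_br N x y k = mat_br N (x k) (y k)"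
  by (simp add: lie_br_def mat_br_def)

lemma tsmul_1: "tsmul 1 x = x" by (rule ext)+ (simp add: tsmul_def)
lemma tsmul_tsmul: "tsmul c (tsmul d x) = tsmul (c * d) x" by (rule ext)+ (simp add: tsmul_def)
lemma tsmul_diff_left: "tsmul c x - tsmul d x = tsmul (c - d) x"
  by (rule ext)+ (simp add: tsmul_def algebra_simps)
lemma tsmul_sum: "tsmul c (\<Sum>i\<in>A. f i) = (\<Sum>i\<in>A. tsmul c (f i))"
  by (rule ext)+ (simp add: tsmul_def sum_fun_apply sum_distrib_left)

lemma lie_br_tsmul_right: "lie_br N w (tsmul c x) = tsmul c (lie_br N w x)"
  by (rule ext)+ (simp add: lie_br_def tsmul_def sum_distrib_left algebra_simps)

lemma lie_br_sum_right: "lie_br N w (\<Sum>i\<in>A. f i) = (\<Sum>i\<in>A. lie_br N w (f i))"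
  by (rule ext)+
    (simp add: lie_br_def sum_fun_apply sum_distrib_left sum_distrib_right
      sum_subtractf[symmetric] sum.swap[of _ A])

lemma lie_gen_0: "0 \<in> lie_gen N S"
  using lie_gen.zero[of N S] by (simp add: zero_fun_def)

lemma lie_gen_plus: "x \<in> lie_gen N S \<Longrightarrow> y \<in> lie_gen N S \<Longrightarrow> x + y \<in> lie_gen N S"
  using lie_gen.add[of x N S y] by (simp add: tadd_eq_plus)

lemma lie_gen_diff: "x \<in> lie_gen N S \<Longrightarrow> y \<in> lie_gen N S \<Longrightarrow> x - y \<in> lie_gen N S"
proof -
  assume "x \<in> lie_gen N S" "y \<in> lie_gen N S"
  then have "tadd x (tsmul (-1) y) \<in> lie_gen N S" by (intro lie_gen.add lie_gen.smul)
  moreover have "tadd x (tsmul (-1) y) = x - y" by (rule ext)+ (simp add: tadd_def tsmul_def)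
  ultimately show ?thesis by simp
qed

lemma lie_gen_sum:
  "finite A \<Longrightarrow> (\<And>i. i \<in> A \<Longrightarrow> f i \<in> lie_gen N S) \<Longrightarrow> (\<Sum>i\<in>A. f i) \<in> lie_gen N S"
  by (induction A rule: finite_induct) (auto simp: lie_gen_0 lie_gen_plus)

lemma lie_gen_eigen_components:
  assumes "finite J"
    and "(\<Sum>j\<in>J. Y j) \<in> lie_gen N S" and "W \<in> lie_gen N S"
    and "\<And>j. j \<in> J \<Longrightarrow> lie_br N W (Y j) = tsmul (lam j) (Y j)" and "inj_on lam J"
  shows "\<forall>j\<in>J. Y j \<in> lie_gen N S"
  using assms
proof (induction J arbitrary: Y rule: finite_induct)
  case empty then show ?case by simp
next
  case (insert j0 F)
  let ?G = "lie_gen N S"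
  define Y' where "Y' j = tsmul (lam j - lam j0) (Y j)" for j
  have "lie_br N W (\<Sum>j\<in>insert j0 F. Y j) - tsmul (lam j0) (\<Sum>j\<in>insert j0 F. Y j) \<in> ?G"
    by (intro lie_gen_diff lie_gen.br lie_gen.smul insert.prems)
  also have "lie_br N W (\<Sum>j\<in>insert j0 F. Y j) - tsmul (lam j0) (\<Sum>j\<in>insert j0 F. Y j)
      = (\<Sum>j\<in>insert j0 F. Y' j)"
    unfolding lie_br_sum_right tsmul_sum sum_subtractf[symmetric] using insert.prems(3)
    by (intro sum.cong refl) (simp add: Y'_def tsmul_diff_left)
  also have "\<dots> = (\<Sum>j\<in>F. Y' j)" using insert.hyps by (simp add: Y'_def tsmul_def zero_fun_def)
  finally have s': "(\<Sum>j\<in>F. Y' j) \<in> ?G" .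
  have e': "\<And>j. j \<in> F \<Longrightarrow> lie_br N W (Y' j) = tsmul (lam j) (Y' j)"
    using insert.prems by (auto simp: Y'_def lie_br_tsmul_right tsmul_tsmul mult.commute)
  have "inj_on lam F" using insert.prems by (auto simp: inj_on_def)
  then have IH: "\<forall>j\<in>F. Y' j \<in> ?G" using insert.IH[OF s' insert.prems(2) e'] by blast
  have YF: "\<forall>j\<in>F. Y j \<in> ?G"
  proof
    fix j assume j: "j \<in> F"
    then have ne: "lam j - lam j0 \<noteq> 0" using insert.prems(4) insert.hyps by (auto simp: inj_on_def)
    have "tsmul (inverse (lam j - lam j0)) (Y' j) \<in> ?G" using IH j by (auto intro: lie_gen.smul)
    then show "Y j \<in> ?G" using ne by (simp add: Y'_def tsmul_tsmul tsmul_1)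
  qed
  have "(\<Sum>j\<in>insert j0 F. Y j) - (\<Sum>j\<in>F. Y j) \<in> ?G"
    by (rule lie_gen_diff[OF insert.prems(1) lie_gen_sum]) (use YF insert.hyps in auto)
  then have "Y j0 \<in> ?G" using insert.hyps by simp
  with YF show ?case by simp
qed

definition tup_single :: "nat \<Rightarrow> mat \<Rightarrow> tup" where
  "tup_single k X = (\<lambda>j. if j = k then X else 0)"

lemma tup_of_eq_sum_single: "tup_of K f = (\<Sum>k\<in>{1..K}. tup_single k (f k))"
proof (rule ext)+
  fix k r s
  have "(\<Sum>j\<in>{1..K}. tup_single j (f j)) k r s = (\<Sum>j\<in>{1..K}. if j = k then f k r s else 0)"
    unfolding sum_fun_apply by (rule sum.cong) (auto simp: tup_single_def)
  then show "tup_of K f k r s = (\<Sum>j\<in>{1..K}. tup_single j (f j)) k r s"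
    by (simp add: tup_of_def)
qed

lemma tup_single_scale: "tup_single k (mat_scale c X) = tsmul c (tup_single k X)"
  by (rule ext)+ (simp add: tup_single_def tsmul_def mat_scale_def)

lemma lie_br_tup_single: "lie_br N g (tup_single k X) = tup_single k (mat_br N (g k) X)"
  by (rule ext)+ (simp add: tup_single_def lie_br_def mat_br_def)

lemma lie_br_tup_of: "lie_br N (tup_of K f) (tup_of K g) = tup_of K (\<lambda>k. mat_br N (f k) (g k))"
  by (rule ext)+ (auto simp: tup_of_def lie_br_def mat_br_def)

definition lie_gen_slice :: "nat \<Rightarrow> tup set \<Rightarrow> nat \<Rightarrow> mat set" where
  "lie_gen_slice N S k = {X. tup_single k X \<in> lie_gen N S}"

lemma lie_gen_slice_subalg: "mat_lie_subalg N (lie_gen_slice N S k)"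
proof -
  have "tup_single k 0 = (\<lambda>k r s. 0)" "tup_single k (X + Y) = tadd (tup_single k X) (tup_single k Y)"
    "tup_single k (mat_scale c X) = tsmul c (tup_single k X)"
    "tup_single k (mat_br N X Y) = lie_br N (tup_single k X) (tup_single k Y)" for X Y c
    by ((rule ext)+, simp add: tup_single_def tadd_def tsmul_def mat_scale_def lie_br_def mat_br_def)+
  then show ?thesis
    unfolding mat_lie_subalg_def lie_gen_slice_def by (auto intro: lie_gen.intros)
qed

lemma lie_gen_slice_br_mem:
  "g \<in> lie_gen N S \<Longrightarrow> X \<in> lie_gen_slice N S k \<Longrightarrow> mat_br N (g k) X \<in> lie_gen_slice N S k"
  unfolding lie_gen_slice_def using lie_gen.br[of g N S "tup_single k X"] by (simp add: lie_br_tup_single)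

lemma lie_gen_const_subalg: "mat_lie_subalg N {X. tup_of K (\<lambda>_. X) \<in> lie_gen N S}"
proof -
  have "tup_of K (\<lambda>_. 0) = (\<lambda>k r s. 0)"
    "tup_of K (\<lambda>_. X + Y) = tadd (tup_of K (\<lambda>_. X)) (tup_of K (\<lambda>_. Y))"
    "tup_of K (\<lambda>_. mat_scale c X) = tsmul c (tup_of K (\<lambda>_. X))" for X Y c
    by ((rule ext)+, simp add: tup_of_def tadd_def tsmul_def mat_scale_def)+
  then show ?thesis
    unfolding mat_lie_subalg_def
    by (auto intro: lie_gen.intros simp: lie_br_tup_of[of N K "\<lambda>_. _" "\<lambda>_. _", symmetric])
qed

text \<open>sep_weight b = 2 + b + b^{-1}.\<close>

definition sep_weight :: "complex \<Rightarrow> complex" where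
  "sep_weight b = (1 + inverse b) * (1 + b)"

lemma sep_weight_eq_imp:
  assumes "x \<noteq> 0" "y \<noteq> 0" "sep_weight x = sep_weight y"
  shows "x = y \<or> x = inverse y"
proof -
  have "x + inverse x = y + inverse y"
    using assms by (simp add: sep_weight_def field_simps)
  then have "(x - y) * (x * y - 1) = 0" using assms(1,2) by (simp add: field_simps)
  then have "x = y \<or> x * y = 1" by simp
  then show ?thesis using assms(2) by (auto simp: field_simps)
qed

section \<open>The image of psi\<close>

text \<open>As so_sl_sum, except that the first component is the orthogonal algebra of the form
  [[0, I], [I, 0]] spanned by the skewE n p q, instead of the skew-symmetric matrices.\<close>

definition orth_sl_sum :: "nat \<Rightarrow> nat \<Rightarrow> tup set" where
  "orth_sl_sum n K = {x.
     (\<forall>k r s. x k r s \<noteq> 0 \<longrightarrow> k \<in> {1..K} \<and> r \<in> {1..2*n} \<and> s \<in> {1..2*n})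
     \<and> half_swap_skew n (x 1)
     \<and> (\<forall>k\<in>{2..K}. (\<Sum>r\<in>{1..2*n}. x k r r) = 0)}"

lemma mat_supported_br:
  assumes X: "mat_supported N X" and Y: "mat_supported N Y"
  shows "mat_supported N (mat_br N X Y)"
  unfolding mat_supported_def
proof (intro allI impI)
  fix r s assume ne: "mat_br N X Y r s \<noteq> 0"
  show "r \<in> {1..N} \<and> s \<in> {1..N}"
  proof (rule ccontr)
    have "X r l = 0" "Y r l = 0" if "r \<notin> {1..N}" for l
      using X Y that unfolding mat_supported_def by blast+
    moreover have "X l s = 0" "Y l s = 0" if "s \<notin> {1..N}" for l
      using X Y that unfolding mat_supported_def by blast+
    moreover assume "\<not> (r \<in> {1..N} \<and> s \<in> {1..N})"
    ultimately have "mat_br N X Y r s = 0"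
      unfolding mat_br_def by (cases "r \<in> {1..N}") simp_all
    with ne show False by simp
  qed
qed

lemma trace_mat_br: "(\<Sum>r\<in>{1..N}. mat_br N X Y r r) = 0"
proof -
  have "(\<Sum>r\<in>{1..N}. \<Sum>l\<in>{1..N}. Y r l * X l r) = (\<Sum>r\<in>{1..N}. \<Sum>l\<in>{1..N}. X r l * Y l r)"
    by (subst sum.swap) (simp add: mult.commute)
  then show ?thesis by (simp add: mat_br_def sum_subtractf)
qed

lemma half_swap_skew_br:
  assumes X: "half_swap_skew n X" and Y: "half_swap_skew n Y"
  shows "half_swap_skew n (mat_br (2*n) X Y)"
  unfolding half_swap_skew_def
proof (intro ballI)
  fix r s assume r: "r \<in> {1..2*n}" and s: "s \<in> {1..2*n}"
  let ?R = "{1..2*n}" and ?h = "half_swap n"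
  have "mat_br (2*n) X Y (?h s) (?h r)
      = (\<Sum>m\<in>?R. X (?h s) (?h m) * Y (?h m) (?h r) - Y (?h s) (?h m) * X (?h m) (?h r))"
    unfolding mat_br_def by (rule sum.reindex_bij_betw[OF half_swap_bij, symmetric])
  also have "\<dots> = (\<Sum>m\<in>?R. Y r m * X m s - X r m * Y m s)"
    using X Y r s unfolding half_swap_skew_def by (intro sum.cong refl) auto
  also have "\<dots> = - mat_br (2*n) X Y r s"
    by (simp add: mat_br_def sum_negf[symmetric])
  finally show "mat_br (2*n) X Y (?h s) (?h r) = - mat_br (2*n) X Y r s" .
qed

lemma skewE_half_swap_skew:
  assumes "p \<in> {1..2*n}" "q \<in> {1..2*n}"
  shows "half_swap_skew n (skewE n p q)"
  unfolding half_swap_skew_def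
proof (intro ballI)
  fix r s assume "r \<in> {1..2*n}" "s \<in> {1..2*n}"
  with assms have 1: "(half_swap n s = p) = (s = half_swap n p)"
    and 2: "(half_swap n r = q) = (r = half_swap n q)"
    and 3: "(half_swap n s = half_swap n q) = (s = q)"
    and 4: "(half_swap n r = half_swap n p) = (r = p)"
    by (auto simp: half_swap_def)
  show "skewE n p q (half_swap n s) (half_swap n r) = - skewE n p q r s"
    unfolding skewE_def matE_def minus_apply 1 2 3 4 by (simp add: conj_commute)
qed

lemma orth_sl_sum_supported: "x \<in> orth_sl_sum n K \<Longrightarrow> mat_supported (2*n) (x k)"
  by (auto simp: orth_sl_sum_def mat_supported_def)

lemma orth_sl_sum_outside: "x \<in> orth_sl_sum n K \<Longrightarrow> k \<notin> {1..K} \<Longrightarrow> x k = 0"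
  by (auto simp: orth_sl_sum_def fun_eq_iff)

lemma orth_sl_sum_zero: "(\<lambda>k r s. 0) \<in> orth_sl_sum n K"
  by (simp add: orth_sl_sum_def half_swap_skew_def)

lemma orth_sl_sum_add:
  assumes x: "x \<in> orth_sl_sum n K" and y: "y \<in> orth_sl_sum n K"
  shows "tadd x y \<in> orth_sl_sum n K"
proof -
  have "k \<in> {1..K} \<and> r \<in> {1..2*n} \<and> s \<in> {1..2*n}" if "tadd x y k r s \<noteq> 0" for k r s
  proof -
    from that have "x k r s \<noteq> 0 \<or> y k r s \<noteq> 0" by (auto simp: tadd_def)
    then show ?thesis using x y unfolding orth_sl_sum_def by blast
  qed
  moreover have "half_swap_skew n (tadd x y 1)"
    using x y by (simp add: orth_sl_sum_def half_swap_skew_def tadd_def)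
  moreover have "\<forall>k\<in>{2..K}. (\<Sum>r\<in>{1..2*n}. tadd x y k r r) = 0"
    using x y by (simp add: orth_sl_sum_def tadd_def sum.distrib)
  ultimately show ?thesis by (simp add: orth_sl_sum_def)
qed

lemma orth_sl_sum_smul: "x \<in> orth_sl_sum n K \<Longrightarrow> tsmul c x \<in> orth_sl_sum n K"
  by (auto simp: orth_sl_sum_def half_swap_skew_def tsmul_def sum_distrib_left[symmetric])

lemma orth_sl_sum_br:
  assumes x: "x \<in> orth_sl_sum n K" and y: "y \<in> orth_sl_sum n K"
  shows "lie_br (2*n) x y \<in> orth_sl_sum n K"
proof -
  have "k \<in> {1..K} \<and> r \<in> {1..2*n} \<and> s \<in> {1..2*n}" if ne: "lie_br (2*n) x y k r s \<noteq> 0" for k r s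
  proof -
    have "k \<in> {1..K}"
      using ne orth_sl_sum_outside[OF x, of k]
      by (cases "k \<in> {1..K}") (auto simp: lie_br_apply mat_br_zero_left)
    moreover have "mat_supported (2*n) (mat_br (2*n) (x k) (y k))"
      using mat_supported_br orth_sl_sum_supported x y by blast
    ultimately show ?thesis using ne by (auto simp: lie_br_apply mat_supported_def)
  qed
  moreover have "half_swap_skew n (lie_br (2*n) x y 1)"
    using x y half_swap_skew_br by (simp add: lie_br_apply orth_sl_sum_def)
  moreover have "\<forall>k\<in>{2..K}. (\<Sum>r\<in>{1..2*n}. lie_br (2*n) x y k r r) = 0"
    using trace_mat_br[of "2*n"] by (simp add: lie_br_apply)
  ultimately show ?thesis by (simp add: orth_sl_sum_def)
qed

lemma orth_sl_sum_tup_of: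
  assumes K: "K \<ge> 1" and supp: "\<And>k. k \<in> {1..K} \<Longrightarrow> mat_supported (2*n) (g k)"
    and skew: "half_swap_skew n (g 1)" and diag: "\<And>k r. g k r r = 0"
  shows "tup_of K g \<in> orth_sl_sum n K"
proof -
  have "k \<in> {1..K} \<and> r \<in> {1..2*n} \<and> s \<in> {1..2*n}" if ne: "tup_of K g k r s \<noteq> 0" for k r s
  proof -
    from ne have k: "k \<in> {1..K}" by (simp add: tup_of_def split: if_splits)
    with ne have "g k r s \<noteq> 0" by (simp add: tup_of_def)
    then show ?thesis using supp[OF k] k by (simp add: mat_supported_def)
  qed
  moreover have "tup_of K g 1 = g 1" using K by (simp add: tup_of_def)
  moreover have "(\<Sum>r\<in>{1..2*n}. tup_of K g k r r) = 0" for k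
    by (cases "k \<in> {1..K}") (auto simp: tup_of_def diag)
  ultimately show ?thesis using skew by (simp add: orth_sl_sum_def)
qed

lemma br_D_psi_first:
  assumes "3 \<le> n"
  shows "mat_br (2*n) (matE 1 1 - matE (n+1) (n+1)) (psi_e n b 1) = psi_e n b 1"
    "mat_br (2*n) (matE 1 1 - matE (n+1) (n+1)) (psi_f n b 1) = - psi_f n b 1"
  using assms by (simp_all add: psi_e_less psi_f_less blockE_def mat_br_simps)

lemma br_D_psi_last:
  assumes "3 \<le> n"
  shows "mat_br (2*n) (matE 1 1 - matE (n+1) (n+1)) (psi_e n b n) = psi_e n b n"
    "mat_br (2*n) (matE 1 1 - matE (n+1) (n+1)) (psi_f n b n) = - psi_f n b n"
  using assms by (simp_all add: psi_e_last psi_f_last mat_br_simps mult_2)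

lemma br_blockE_step:
  assumes "1 \<le> i" "i + 1 < n"
  shows "mat_br (2*n) (blockE n (i+1) i) (mat_br (2*n) (blockE n (i+1) (i+2)) (blockE n i (i+1)))
      = - blockE n (i+1) (i+2)"
    "mat_br (2*n) (blockE n i (i+1)) (mat_br (2*n) (blockE n (i+2) (i+1)) (blockE n (i+1) i))
      = - blockE n (i+2) (i+1)"
  using assms by (auto simp: blockE_def mat_br_simps)

locale psi_image_setting =
  fixes n K :: nat and a :: "nat \<Rightarrow> complex"
  assumes n3: "n \<ge> 3" and K1: "K \<ge> 1"
    and a_nonzero: "\<forall>k\<in>{1..K}. a k \<noteq> 0"
    and a_distinct: "\<forall>k\<in>{1..K}. \<forall>j\<in>{1..K}. k \<noteq> j \<longrightarrow> a k \<noteq> a j \<and> a k \<noteq> inverse (a j)"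
    and a_1: "a 1 = -1" and a_ne_1: "\<forall>k\<in>{2..K}. a k \<noteq> 1"
begin

definition gens :: "tup set" where
  "gens = (psiA_e n K a ` {1..n}) \<union> (psiA_f n K a ` {1..n})
      \<union> ((\<lambda>i. lie_br (2*n) (psiA_e n K a i) (psiA_f n K a i)) ` {1..n})"

abbreviation G :: "tup set" where "G \<equiv> lie_gen (2*n) gens"

abbreviation slice :: "nat \<Rightarrow> mat set" where "slice k \<equiv> lie_gen_slice (2*n) gens k"

abbreviation D :: mat where "D \<equiv> matE 1 1 - matE (n+1) (n+1)"

lemma psi_image_eq: "psi_image n K a = G"
  by (simp add: psi_image_def gens_def)

lemma psi_e_tup_mem: "i \<in> {1..n} \<Longrightarrow> tup_of K (\<lambda>k. psi_e n (a k) i) \<in> G"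
  by (rule lie_gen.gen) (auto simp: gens_def psiA_e_def)

lemma psi_f_tup_mem: "i \<in> {1..n} \<Longrightarrow> tup_of K (\<lambda>k. psi_f n (a k) i) \<in> G"
  by (rule lie_gen.gen) (auto simp: gens_def psiA_f_def)

lemma const_blockE_mem:
  assumes "p \<in> {1..n}" "q \<in> {1..n}" "p \<noteq> q"
  shows "tup_of K (\<lambda>_. blockE n p q) \<in> G"
proof -
  let ?C = "{X. tup_of K (\<lambda>_. X) \<in> G}"
  have "blockE n p q \<in> ?C"
  proof (rule subalg_blockE_mem[OF lie_gen_const_subalg _ assms])
    fix i assume "1 \<le> i" "i < n"
    then show "blockE n i (i+1) \<in> ?C \<and> blockE n (i+1) i \<in> ?C"
      using psi_e_tup_mem[of i] psi_f_tup_mem[of i] by (simp add: psi_e_less psi_f_less)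
  qed
  then show ?thesis by simp
qed

lemma separator_mem: "tup_of K (\<lambda>k. mat_scale (sep_weight (a k)) D) \<in> G"
proof -
  have in_range: "1 \<in> {1..n}" "n \<in> {1..n}" "(1::nat) \<noteq> n" using n3 by auto
  have "lie_br (2*n) (tup_of K (\<lambda>_. blockE n 1 n)) (tup_of K (\<lambda>k. psi_e n (a k) n)) \<in> G"
    using const_blockE_mem psi_e_tup_mem in_range by (intro lie_gen.br) auto
  moreover have "lie_br (2*n) (tup_of K (\<lambda>_. blockE n 1 n)) (tup_of K (\<lambda>k. psi_e n (a k) n))
      = tup_of K (\<lambda>k. mat_scale (1 + inverse (a k)) (matE 1 (n+1)))"
    using n3 br_blockE_psi_e_last[of n] by (simp add: lie_br_tup_of)
  moreover have "lie_br (2*n) (tup_of K (\<lambda>k. psi_f n (a k) n)) (tup_of K (\<lambda>_. blockE n n 1)) \<in> G"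
    using const_blockE_mem psi_f_tup_mem in_range by (intro lie_gen.br) auto
  moreover have "lie_br (2*n) (tup_of K (\<lambda>k. psi_f n (a k) n)) (tup_of K (\<lambda>_. blockE n n 1))
      = tup_of K (\<lambda>k. mat_scale (1 + a k) (matE (n+1) 1))"
    using n3 br_psi_f_last_blockE[of n] by (simp add: lie_br_tup_of)
  ultimately have "lie_br (2*n) (tup_of K (\<lambda>k. mat_scale (1 + inverse (a k)) (matE 1 (n+1))))
      (tup_of K (\<lambda>k. mat_scale (1 + a k) (matE (n+1) 1))) \<in> G"
    by (metis lie_gen.br)
  then show ?thesis
    using n3 by (simp add: lie_br_tup_of mat_br_simps mat_scale_scale sep_weight_def mult.commute)
qed

lemma sep_weight_inj: "mu \<noteq> 0 \<Longrightarrow> inj_on (\<lambda>k. sep_weight (a k) * mu) {1..K}"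
proof (rule inj_onI)
  fix k j assume "mu \<noteq> 0" and k: "k \<in> {1..K}" and j: "j \<in> {1..K}"
    and "sep_weight (a k) * mu = sep_weight (a j) * mu"
  then have "sep_weight (a k) = sep_weight (a j)" by simp
  then have "a k = a j \<or> a k = inverse (a j)" using sep_weight_eq_imp a_nonzero k j by blast
  then show "k = j" using a_distinct k j by blast
qed

lemma single_mem_of_eigen:
  assumes g: "tup_of K g \<in> G" and e: "\<And>k. mat_br (2*n) D (g k) = mat_scale mu (g k)"
    and mu: "mu \<noteq> 0" and k: "k \<in> {1..K}"
  shows "g k \<in> slice k"
proof -
  have "\<forall>k\<in>{1..K}. tup_single k (g k) \<in> G"
  proof (rule lie_gen_eigen_components[OF _ _ separator_mem _ sep_weight_inj[OF mu]])
    show "(\<Sum>k\<in>{1..K}. tup_single k (g k)) \<in> G" using g by (simp add: tup_of_eq_sum_single)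
    fix k assume "k \<in> {1..K}"
    then have "tup_of K (\<lambda>k. mat_scale (sep_weight (a k)) D) k = mat_scale (sep_weight (a k)) D"
      by (simp add: tup_of_def)
    then show "lie_br (2*n) (tup_of K (\<lambda>k. mat_scale (sep_weight (a k)) D)) (tup_single k (g k))
        = tsmul (sep_weight (a k) * mu) (tup_single k (g k))"
      by (simp only: lie_br_tup_single mat_br_scale_left e mat_scale_scale tup_single_scale)
  qed simp
  then show ?thesis using k by (simp add: lie_gen_slice_def)
qed

lemma psi_closed_slice:
  assumes k: "k \<in> {1..K}"
  shows "psi_closed n (a k) (slice k)"
proof -
  note subalg = lie_gen_slice_subalg[of "2*n" gens k]
  have first_last: "psi_e n (a k) i \<in> slice k \<and> psi_f n (a k) i \<in> slice k" if "i = 1 \<or> i = n" for i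
    using that n3 single_mem_of_eigen[OF psi_e_tup_mem[of i], of 1] single_mem_of_eigen[OF psi_f_tup_mem[of i], of "-1"]
      br_D_psi_first[OF n3] br_D_psi_last[OF n3] k
    by (auto simp: mat_scale_minus_1)
  have mid: "psi_e n (a k) (d+1) \<in> slice k \<and> psi_f n (a k) (d+1) \<in> slice k" if "d + 1 < n" for d
    using that
  proof (induction d)
    case 0 then show ?case using first_last by simp
  next
    case (Suc d)
    let ?B = "\<lambda>p q. tup_of K (\<lambda>_. blockE n p q)"
    have B: "?B (d+1) (d+2) \<in> G" "?B (d+2) (d+1) \<in> G" "?B (d+2) (d+3) \<in> G" "?B (d+3) (d+2) \<in> G"
      using Suc.prems by (auto intro!: const_blockE_mem)
    have IH: "blockE n (d+1) (d+2) \<in> slice k" "blockE n (d+2) (d+1) \<in> slice k"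
      using Suc by (simp_all add: psi_e_less psi_f_less)
    have "mat_br (2*n) (?B (d+2) (d+1) k) (mat_br (2*n) (?B (d+2) (d+3) k) (blockE n (d+1) (d+2))) \<in> slice k"
      "mat_br (2*n) (?B (d+1) (d+2) k) (mat_br (2*n) (?B (d+3) (d+2) k) (blockE n (d+2) (d+1))) \<in> slice k"
      using B IH by (auto intro!: lie_gen_slice_br_mem)
    then have "- blockE n (d+2) (d+3) \<in> slice k" "- blockE n (d+3) (d+2) \<in> slice k"
      using br_blockE_step[of "d+1" n] Suc.prems k by (simp_all add: tup_of_def numeral_eq_Suc)
    then show ?case
      using subalg_uminus[OF subalg] Suc.prems by (fastforce simp: psi_e_less psi_f_less numeral_eq_Suc)
  qed
  show ?thesis
  proof
    fix i assume "i \<in> {1..n}"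
    then have "psi_e n (a k) i \<in> slice k \<and> psi_f n (a k) i \<in> slice k"
      using first_last mid[of "i-1"] by (cases "i = n") auto
    then show "psi_e n (a k) i \<in> slice k" "psi_f n (a k) i \<in> slice k" by auto
  qed (use subalg n3 in auto)
qed

lemma slice_traceless_mem:
  assumes k: "k \<in> {2..K}" and X: "mat_supported (2*n) X" and tr: "(\<Sum>r\<in>{1..2*n}. X r r) = 0"
  shows "X \<in> slice k"
proof -
  have k1: "k \<in> {1..K}" and "1 \<in> {1..K}" "k \<noteq> 1" using k K1 by auto
  then have "a k \<noteq> a 1" using a_distinct by blast
  then have "a k \<noteq> 0" "a k \<noteq> 1" "a k \<noteq> -1" using a_nonzero a_ne_1 a_1 k k1 by auto
  then interpret psi_closed_generic n "a k" "slice k"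
    using psi_closed_slice[OF k1] by (simp add: psi_closed_generic_def psi_closed_generic_axioms_def)
  show ?thesis by (rule subalg_traceless_mem[OF subalg matE_mem X tr])
qed

lemma slice_orth_mem:
  assumes X: "mat_supported (2*n) X" and skew: "half_swap_skew n X"
  shows "X \<in> slice 1"
proof -
  interpret psi_closed_orth n "slice 1"
    using psi_closed_slice[of 1] K1 a_1 by (simp add: psi_closed_orth_def)
  show ?thesis by (rule subalg_half_swap_skew_mem[OF subalg skewE_mem X skew])
qed

lemma orth_sl_sum_subset: "orth_sl_sum n K \<subseteq> G"
proof
  fix x assume x: "x \<in> orth_sl_sum n K"
  have "tup_single k (x k) \<in> G" if k: "k \<in> {1..K}" for k
  proof -
    have "x k \<in> slice k"
    proof (cases "k = 1")
      case True
      then show ?thesis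
        using x orth_sl_sum_supported[OF x, of 1] slice_orth_mem[of "x 1"] by (simp add: orth_sl_sum_def)
    next
      case False
      with k x show ?thesis
        by (intro slice_traceless_mem orth_sl_sum_supported) (auto simp: orth_sl_sum_def)
    qed
    then show ?thesis by (simp add: lie_gen_slice_def)
  qed
  then have "(\<Sum>k\<in>{1..K}. tup_single k (x k)) \<in> G" by (intro lie_gen_sum) auto
  moreover have "tup_of K x = x" using orth_sl_sum_outside[OF x] by (auto simp: tup_of_def fun_eq_iff)
  ultimately show "x \<in> G" by (metis tup_of_eq_sum_single)
qed

lemma psi_e_orth:
  assumes "i \<in> {1..n}"
  shows "psi_e n (-1) i = skewE n i (i+1)"
proof (cases "i = n")
  case True
  then show ?thesis by (simp add: psi_e_last skewE_def half_swap_def mat_br_simps mult_2)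
qed (use assms in \<open>simp add: psi_e_less skewE_low_low\<close>)

lemma psi_f_orth:
  assumes "i \<in> {1..n}"
  shows "psi_f n (-1) i = skewE n (i+1) i"
proof (cases "i = n")
  case True
  then show ?thesis by (simp add: psi_f_last skewE_def half_swap_def mat_br_simps mult_2)
qed (use assms in \<open>simp add: psi_f_less skewE_low_low\<close>)

lemma psi_tup_orth_sl_sum:
  assumes i: "i \<in> {1..n}"
  shows "tup_of K (\<lambda>k. psi_e n (a k) i) \<in> orth_sl_sum n K"
    "tup_of K (\<lambda>k. psi_f n (a k) i) \<in> orth_sl_sum n K"
proof -
  have "i + 1 \<in> {1..2*n}" "i \<in> {1..2*n}" using i by auto
  then have "half_swap_skew n (psi_e n (a 1) i)" "half_swap_skew n (psi_f n (a 1) i)"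
    using i a_1 psi_e_orth[OF i] psi_f_orth[OF i] by (simp_all add: skewE_half_swap_skew)
  moreover have "mat_supported (2*n) (psi_e n b i)" "mat_supported (2*n) (psi_f n b i)" for b
    using i by (auto simp: mat_supported_def psi_e_def psi_f_def matE_def)
  moreover have "psi_e n b i r r = 0" "psi_f n b i r r = 0" for b r
    using n3 by (auto simp: psi_e_def psi_f_def matE_def)
  ultimately show "tup_of K (\<lambda>k. psi_e n (a k) i) \<in> orth_sl_sum n K"
    "tup_of K (\<lambda>k. psi_f n (a k) i) \<in> orth_sl_sum n K"
    using K1 by (simp_all add: orth_sl_sum_tup_of)
qed

lemma G_subset_orth_sl_sum: "G \<subseteq> orth_sl_sum n K"
proof
  fix x assume "x \<in> G"
  then show "x \<in> orth_sl_sum n K"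
  proof (induction rule: lie_gen.induct)
    case (gen x)
    then show ?case using psi_tup_orth_sl_sum orth_sl_sum_br
      by (auto simp: gens_def psiA_e_def psiA_f_def)
  qed (auto intro: orth_sl_sum_zero orth_sl_sum_add orth_sl_sum_smul orth_sl_sum_br)
qed

lemma psi_image_eq_orth_sl_sum: "psi_image n K a = orth_sl_sum n K"
  using orth_sl_sum_subset G_subset_orth_sl_sum psi_image_eq by blast

end

section \<open>Conjugating the orthogonal algebra to so_{2n}\<close>

definition mat_mult :: "nat \<Rightarrow> mat \<Rightarrow> mat \<Rightarrow> mat" where
  "mat_mult N X Y = (\<lambda>r s. \<Sum>l\<in>{1..N}. X r l * Y l s)"

definition mat_id :: "nat \<Rightarrow> mat" where
  "mat_id N r s = (if r = s \<and> r \<in> {1..N} then 1 else 0)"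

lemma mat_mult_assoc: "mat_mult N (mat_mult N X Y) Z = mat_mult N X (mat_mult N Y Z)"
proof (rule ext)+
  fix r s
  have "mat_mult N (mat_mult N X Y) Z r s = (\<Sum>l\<in>{1..N}. \<Sum>m\<in>{1..N}. X r m * Y m l * Z l s)"
    by (simp add: mat_mult_def sum_distrib_right)
  also have "\<dots> = (\<Sum>m\<in>{1..N}. \<Sum>l\<in>{1..N}. X r m * Y m l * Z l s)" by (rule sum.swap)
  also have "\<dots> = mat_mult N X (mat_mult N Y Z) r s"
    by (simp add: mat_mult_def sum_distrib_left mult.assoc)
  finally show "mat_mult N (mat_mult N X Y) Z r s = mat_mult N X (mat_mult N Y Z) r s" .
qed

lemma mat_mult_id_left: "mat_supported N X \<Longrightarrow> mat_mult N (mat_id N) X = X"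
proof (rule ext)+
  fix r s assume X: "mat_supported N X"
  have "mat_mult N (mat_id N) X r s = (\<Sum>l\<in>{1..N}. if l = r then (if r \<in> {1..N} then X r s else 0) else 0)"
    unfolding mat_mult_def by (rule sum.cong) (auto simp: mat_id_def)
  also have "\<dots> = X r s" using X by (auto simp: mat_supported_def)
  finally show "mat_mult N (mat_id N) X r s = X r s" .
qed

lemma mat_mult_id_right: "mat_supported N X \<Longrightarrow> mat_mult N X (mat_id N) = X"
proof (rule ext)+
  fix r s assume X: "mat_supported N X"
  have "mat_mult N X (mat_id N) r s = (\<Sum>l\<in>{1..N}. if l = s then (if s \<in> {1..N} then X r s else 0) else 0)"
    unfolding mat_mult_def by (rule sum.cong) (auto simp: mat_id_def)
  also have "\<dots> = X r s" using X by (auto simp: mat_supported_def)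
  finally show "mat_mult N X (mat_id N) r s = X r s" .
qed

lemma mat_br_eq_mult: "mat_br N X Y = mat_mult N X Y - mat_mult N Y X"
  by (rule ext)+ (simp add: mat_br_def mat_mult_def sum_subtractf)

lemma mat_mult_diff_left: "mat_mult N (X - Y) Z = mat_mult N X Z - mat_mult N Y Z"
  by (rule ext)+ (simp add: mat_mult_def sum_subtractf left_diff_distrib)
lemma mat_mult_diff_right: "mat_mult N Z (X - Y) = mat_mult N Z X - mat_mult N Z Y"
  by (rule ext)+ (simp add: mat_mult_def sum_subtractf right_diff_distrib)
lemma mat_mult_add_left: "mat_mult N (X + Y) Z = mat_mult N X Z + mat_mult N Y Z"
  by (rule ext)+ (simp add: mat_mult_def sum.distrib distrib_right)
lemma mat_mult_add_right: "mat_mult N Z (X + Y) = mat_mult N Z X + mat_mult N Z Y"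
  by (rule ext)+ (simp add: mat_mult_def sum.distrib distrib_left)
lemma mat_mult_scale_left: "mat_mult N (mat_scale c X) Z = mat_scale c (mat_mult N X Z)"
  by (rule ext)+ (simp add: mat_mult_def mat_scale_def sum_distrib_left mult.assoc)
lemma mat_mult_scale_right: "mat_mult N Z (mat_scale c X) = mat_scale c (mat_mult N Z X)"
  by (rule ext)+ (simp add: mat_mult_def mat_scale_def sum_distrib_left algebra_simps)

lemma mat_mult_zero_row: "(\<And>l. X r l = 0) \<Longrightarrow> mat_mult N X Y r s = 0"
  by (simp add: mat_mult_def)
lemma mat_mult_zero_col: "(\<And>l. Y l s = 0) \<Longrightarrow> mat_mult N X Y r s = 0"
  by (simp add: mat_mult_def)

lemma mat_supported_mult:
  assumes X: "mat_supported N X" and Y: "mat_supported N Y"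
  shows "mat_supported N (mat_mult N X Y)"
  unfolding mat_supported_def
proof (intro allI impI)
  fix r s assume "mat_mult N X Y r s \<noteq> 0"
  then obtain l where "X r l * Y l s \<noteq> 0"
    unfolding mat_mult_def using sum.not_neutral_contains_not_neutral by blast
  then show "r \<in> {1..N} \<and> s \<in> {1..N}" using X Y by (auto simp: mat_supported_def)
qed

text \<open>In n x n blocks, P = [[I, iI], [I, -iI]] and Q = P^{-1} = 1/2 [[I, I], [-iI, iI]].
  Since P^T J P = 2I for J = [[0, I], [I, 0]], conjugation X \<mapsto> Q X P maps the
  J-orthogonal matrices (half_swap_skew) onto the skew-symmetric ones.\<close>

definition half_index :: "nat \<Rightarrow> nat \<Rightarrow> nat" where
  "half_index n r = (if r \<le> n then r else r - n)"

definition conj_P :: "nat \<Rightarrow> mat" where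
  "conj_P n r s = (if r \<in> {1..2*n} \<and> s \<in> {1..2*n} \<and> half_index n r = half_index n s
     then (if s \<le> n then 1 else if r \<le> n then \<i> else - \<i>) else 0)"

definition conj_Q :: "nat \<Rightarrow> mat" where
  "conj_Q n r s = (if r \<in> {1..2*n} \<and> s \<in> {1..2*n} \<and> half_index n r = half_index n s
     then (if r \<le> n then 1/2 else if s \<le> n then - \<i>/2 else \<i>/2) else 0)"

lemma half_range_obtain:
  fixes r n :: nat
  assumes "r \<in> {1..2*n}"
  obtains u where "u \<in> {1..n}" "r \<in> {u, n + u}"
proof (cases "r \<le> n")
  case True then show ?thesis using that assms by auto
next
  case False
  then have "r - n \<in> {1..n}" "r \<in> {r - n, n + (r - n)}" using assms by auto
  then show ?thesis by (rule that)
qed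

lemma sum_two_points:
  fixes u n :: nat
  assumes u: "1 \<le> u" "u \<le> n"
    and z: "\<And>l. l \<in> {1..2*n} \<Longrightarrow> l \<noteq> u \<Longrightarrow> l \<noteq> n + u \<Longrightarrow> g l = 0"
  shows "(\<Sum>l\<in>{1..2*n}. g l) = g u + g (n + u)"
proof -
  have "(\<Sum>l\<in>{1..2*n}. g l) = (\<Sum>l\<in>{u, n + u}. g l)"
    by (rule sum.mono_neutral_right) (use u z in auto)
  also have "\<dots> = g u + g (n + u)" using u by simp
  finally show ?thesis .
qed

context
  fixes n :: nat and u :: nat
  assumes u: "1 \<le> u" "u \<le> n"
begin

lemma mat_mult_P_low: "mat_mult (2*n) Z (conj_P n) l u = Z l u + Z l (n + u)"
  unfolding mat_mult_def by (subst sum_two_points[OF u]) (use u in \<open>auto simp: conj_P_def half_index_def\<close>)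
lemma mat_mult_P_high: "mat_mult (2*n) Z (conj_P n) l (n + u) = \<i> * Z l u - \<i> * Z l (n + u)"
  unfolding mat_mult_def by (subst sum_two_points[OF u]) (use u in \<open>auto simp: conj_P_def half_index_def\<close>)
lemma P_mult_low: "mat_mult (2*n) (conj_P n) Z u s = Z u s + \<i> * Z (n + u) s"
  unfolding mat_mult_def by (subst sum_two_points[OF u]) (use u in \<open>auto simp: conj_P_def half_index_def\<close>)
lemma P_mult_high: "mat_mult (2*n) (conj_P n) Z (n + u) s = Z u s - \<i> * Z (n + u) s"
  unfolding mat_mult_def by (subst sum_two_points[OF u]) (use u in \<open>auto simp: conj_P_def half_index_def\<close>)
lemma mat_mult_Q_low: "mat_mult (2*n) Z (conj_Q n) l u = Z l u / 2 - \<i> * Z l (n + u) / 2"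
  unfolding mat_mult_def by (subst sum_two_points[OF u]) (use u in \<open>auto simp: conj_Q_def half_index_def\<close>)
lemma mat_mult_Q_high: "mat_mult (2*n) Z (conj_Q n) l (n + u) = Z l u / 2 + \<i> * Z l (n + u) / 2"
  unfolding mat_mult_def by (subst sum_two_points[OF u]) (use u in \<open>auto simp: conj_Q_def half_index_def\<close>)
lemma Q_mult_low: "mat_mult (2*n) (conj_Q n) Z u s = Z u s / 2 + Z (n + u) s / 2"
  unfolding mat_mult_def by (subst sum_two_points[OF u]) (use u in \<open>auto simp: conj_Q_def half_index_def\<close>)
lemma Q_mult_high: "mat_mult (2*n) (conj_Q n) Z (n + u) s = - \<i> * Z u s / 2 + \<i> * Z (n + u) s / 2"
  unfolding mat_mult_def by (subst sum_two_points[OF u]) (use u in \<open>auto simp: conj_Q_def half_index_def\<close>)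

end

lemmas conj_mult_simps = mat_mult_P_low mat_mult_P_high P_mult_low P_mult_high
  mat_mult_Q_low mat_mult_Q_high Q_mult_low Q_mult_high

lemma conj_P_outside: "r \<notin> {1..2*n} \<or> s \<notin> {1..2*n} \<Longrightarrow> conj_P n r s = 0"
  by (auto simp: conj_P_def)
lemma conj_Q_outside: "r \<notin> {1..2*n} \<or> s \<notin> {1..2*n} \<Longrightarrow> conj_Q n r s = 0"
  by (auto simp: conj_Q_def)

lemma mat_supported_conj_P: "mat_supported (2*n) (conj_P n)"
  by (auto simp: mat_supported_def conj_P_def)
lemma mat_supported_conj_Q: "mat_supported (2*n) (conj_Q n)"
  by (auto simp: mat_supported_def conj_Q_def)

lemma conj_inverse:
  "mat_mult (2*n) (conj_Q n) (conj_P n) = mat_id (2*n)"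
  "mat_mult (2*n) (conj_P n) (conj_Q n) = mat_id (2*n)"
proof -
  have "mat_mult (2*n) (conj_Q n) (conj_P n) r s = mat_id (2*n) r s
      \<and> mat_mult (2*n) (conj_P n) (conj_Q n) r s = mat_id (2*n) r s" for r s
  proof (cases "r \<in> {1..2*n} \<and> s \<in> {1..2*n}")
    case True
    then obtain u v where u: "u \<in> {1..n}" "r \<in> {u, n + u}" and v: "v \<in> {1..n}" "s \<in> {v, n + v}"
      by (meson half_range_obtain)
    from u(2) v(2) show ?thesis
      using u(1) v(1) by (elim insertE emptyE; simp add: conj_mult_simps)
        (auto simp: mat_id_def conj_P_def conj_Q_def half_index_def)
  qed (auto simp: mat_id_def mat_mult_zero_row mat_mult_zero_col conj_P_outside conj_Q_outside)
  then show "mat_mult (2*n) (conj_Q n) (conj_P n) = mat_id (2*n)"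
    "mat_mult (2*n) (conj_P n) (conj_Q n) = mat_id (2*n)" by (simp_all add: fun_eq_iff)
qed

definition to_skew :: "nat \<Rightarrow> mat \<Rightarrow> mat" where
  "to_skew n X = mat_mult (2*n) (conj_Q n) (mat_mult (2*n) X (conj_P n))"

definition from_skew :: "nat \<Rightarrow> mat \<Rightarrow> mat" where
  "from_skew n Y = mat_mult (2*n) (conj_P n) (mat_mult (2*n) Y (conj_Q n))"

lemma to_skew_outside: "r \<notin> {1..2*n} \<or> s \<notin> {1..2*n} \<Longrightarrow> to_skew n X r s = 0"
  unfolding to_skew_def
  by (auto intro!: mat_mult_zero_row mat_mult_zero_col simp: conj_Q_outside conj_P_outside mat_mult_def)
lemma from_skew_outside: "r \<notin> {1..2*n} \<or> s \<notin> {1..2*n} \<Longrightarrow> from_skew n X r s = 0"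
  unfolding from_skew_def
  by (auto intro!: mat_mult_zero_row mat_mult_zero_col simp: conj_Q_outside conj_P_outside mat_mult_def)

lemma to_skew_skew:
  assumes skew: "half_swap_skew n X"
  shows "to_skew n X s r = - to_skew n X r s"
proof (cases "r \<in> {1..2*n} \<and> s \<in> {1..2*n}")
  case True
  then obtain u v where u: "u \<in> {1..n}" "r \<in> {u, n + u}" and v: "v \<in> {1..n}" "s \<in> {v, n + v}"
    by (meson half_range_obtain)
  have "u \<in> {1..2*n}" "v \<in> {1..2*n}" "n + u \<in> {1..2*n}" "n + v \<in> {1..2*n}" using u v by auto
  then have "X v u = - X (n + u) (n + v)" "X v (n + u) = - X u (n + v)"
    "X (n + v) u = - X (n + u) v" "X (n + v) (n + u) = - X u v"
    using skew u v unfolding half_swap_skew_def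
    by (metis half_swap_low half_swap_high atLeastAtMost_iff)+
  with u(2) v(2) show ?thesis
    using u(1) v(1) by (elim insertE emptyE; simp add: to_skew_def conj_mult_simps; simp add: field_simps)
qed (auto simp: to_skew_outside)

lemma from_skew_half_swap_skew:
  assumes skew: "\<And>r s. Y s r = - Y r s"
  shows "half_swap_skew n (from_skew n Y)"
  unfolding half_swap_skew_def
proof (intro ballI)
  fix r s assume "r \<in> {1..2*n}" "s \<in> {1..2*n}"
  then obtain u v where u: "u \<in> {1..n}" "r \<in> {u, n + u}" and v: "v \<in> {1..n}" "s \<in> {v, n + v}"
    by (meson half_range_obtain)
  have "Y v u = - Y u v" "Y v (n + u) = - Y (n + u) v" "Y (n + v) u = - Y u (n + v)"
    "Y (n + v) (n + u) = - Y (n + u) (n + v)" by (rule skew)+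
  with u(2) v(2) show "from_skew n Y (half_swap n s) (half_swap n r) = - from_skew n Y r s"
    using u(1) v(1)
    by (elim insertE emptyE; simp add: half_swap_low half_swap_high from_skew_def conj_mult_simps;
        simp add: field_simps)
qed

lemma to_skew_mult:
  assumes "mat_supported (2*n) Y"
  shows "mat_mult (2*n) (to_skew n X) (to_skew n Y) = to_skew n (mat_mult (2*n) X Y)"
proof -
  have "mat_supported (2*n) (mat_mult (2*n) Y (conj_P n))"
    using assms mat_supported_conj_P by (rule mat_supported_mult)
  then show ?thesis
    by (simp add: to_skew_def mat_mult_assoc conj_inverse mat_mult_id_left
        flip: mat_mult_assoc[of _ "conj_P n" "conj_Q n"])
qed

lemma to_skew_br:
  assumes "mat_supported (2*n) X" "mat_supported (2*n) Y"
  shows "to_skew n (mat_br (2*n) X Y) = mat_br (2*n) (to_skew n X) (to_skew n Y)"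
  unfolding mat_br_eq_mult to_skew_mult[OF assms(1)] to_skew_mult[OF assms(2)]
  by (simp add: to_skew_def mat_mult_diff_left mat_mult_diff_right)

lemma from_skew_to_skew:
  assumes X: "mat_supported (2*n) X"
  shows "from_skew n (to_skew n X) = X"
proof -
  have "mat_supported (2*n) (mat_mult (2*n) (mat_mult (2*n) X (conj_P n)) (conj_Q n))"
    using X mat_supported_conj_P mat_supported_conj_Q mat_supported_mult by blast
  then have "from_skew n (to_skew n X) = mat_mult (2*n) X (mat_mult (2*n) (conj_P n) (conj_Q n))"
    by (simp add: from_skew_def to_skew_def mat_mult_assoc conj_inverse mat_mult_id_left
        flip: mat_mult_assoc[of _ "conj_P n" "conj_Q n"])
  then show ?thesis using X by (simp add: conj_inverse mat_mult_id_right)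
qed

lemma to_skew_from_skew:
  assumes Y: "mat_supported (2*n) Y"
  shows "to_skew n (from_skew n Y) = Y"
proof -
  have "mat_supported (2*n) (mat_mult (2*n) (mat_mult (2*n) Y (conj_Q n)) (conj_P n))"
    using Y mat_supported_conj_P mat_supported_conj_Q mat_supported_mult by blast
  then have "to_skew n (from_skew n Y) = mat_mult (2*n) Y (mat_mult (2*n) (conj_Q n) (conj_P n))"
    by (simp add: from_skew_def to_skew_def mat_mult_assoc conj_inverse mat_mult_id_left
        flip: mat_mult_assoc[of _ "conj_Q n" "conj_P n"])
  then show ?thesis using Y by (simp add: conj_inverse mat_mult_id_right)
qed

lemma to_skew_add: "to_skew n (X + Y) = to_skew n X + to_skew n Y"
  by (simp add: to_skew_def mat_mult_add_left mat_mult_add_right)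
lemma to_skew_scale: "to_skew n (mat_scale c X) = mat_scale c (to_skew n X)"
  by (simp add: to_skew_def mat_mult_scale_left mat_mult_scale_right)

definition to_skew_first :: "nat \<Rightarrow> tup \<Rightarrow> tup" where
  "to_skew_first n x = (\<lambda>k. if k = 1 then to_skew n (x 1) else x k)"

definition from_skew_first :: "nat \<Rightarrow> tup \<Rightarrow> tup" where
  "from_skew_first n y = (\<lambda>k. if k = 1 then from_skew n (y 1) else y k)"

lemma to_skew_first_mem:
  assumes K: "K \<ge> 1" and x: "x \<in> orth_sl_sum n K"
  shows "to_skew_first n x \<in> so_sl_sum n K"
proof -
  have "k \<in> {1..K} \<and> r \<in> {1..2*n} \<and> s \<in> {1..2*n}" if ne: "to_skew_first n x k r s \<noteq> 0" for k r s
  proof (cases "k = 1")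
    case True
    with ne have "to_skew n (x 1) r s \<noteq> 0" by (simp add: to_skew_first_def)
    then show ?thesis using to_skew_outside[of r n s "x 1"] True K by auto
  next
    case False
    with ne have "x k r s \<noteq> 0" by (simp add: to_skew_first_def)
    then show ?thesis using x unfolding orth_sl_sum_def by blast
  qed
  moreover have "half_swap_skew n (x 1)" using x by (simp add: orth_sl_sum_def)
  then have "to_skew_first n x 1 s r = - to_skew_first n x 1 r s" for r s
    using to_skew_skew[of n "x 1" s r] by (simp add: to_skew_first_def)
  moreover have "\<forall>k\<in>{2..K}. (\<Sum>r\<in>{1..2*n}. to_skew_first n x k r r) = 0"
    using x by (simp add: orth_sl_sum_def to_skew_first_def)
  ultimately show ?thesis unfolding so_sl_sum_def by blast
qed

lemma from_skew_first_mem: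
  assumes K: "K \<ge> 1" and y: "y \<in> so_sl_sum n K"
  shows "from_skew_first n y \<in> orth_sl_sum n K"
proof -
  have "k \<in> {1..K} \<and> r \<in> {1..2*n} \<and> s \<in> {1..2*n}" if ne: "from_skew_first n y k r s \<noteq> 0" for k r s
  proof (cases "k = 1")
    case True
    with ne have "from_skew n (y 1) r s \<noteq> 0" by (simp add: from_skew_first_def)
    then show ?thesis using from_skew_outside[of r n s "y 1"] True K by auto
  next
    case False
    with ne have "y k r s \<noteq> 0" by (simp add: from_skew_first_def)
    then show ?thesis using y unfolding so_sl_sum_def by blast
  qed
  moreover have "half_swap_skew n (from_skew n (y 1))"
    by (rule from_skew_half_swap_skew) (use y in \<open>unfold so_sl_sum_def, blast\<close>)
  then have "half_swap_skew n (from_skew_first n y 1)" by (simp add: from_skew_first_def)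
  moreover have "\<forall>k\<in>{2..K}. (\<Sum>r\<in>{1..2*n}. y k r r) = 0"
    using y unfolding so_sl_sum_def by blast
  then have "\<forall>k\<in>{2..K}. (\<Sum>r\<in>{1..2*n}. from_skew_first n y k r r) = 0"
    by (simp add: from_skew_first_def)
  ultimately show ?thesis by (simp add: orth_sl_sum_def)
qed

lemma lie_iso_orth_sl_sum_so_sl_sum:
  assumes K: "K \<ge> 1"
  shows "lie_iso (2*n) (orth_sl_sum n K) (so_sl_sum n K)"
  unfolding lie_iso_def
proof (intro exI conjI ballI allI)
  show "bij_betw (to_skew_first n) (orth_sl_sum n K) (so_sl_sum n K)"
  proof (rule bij_betw_byWitness[where f' = "from_skew_first n"])
    show "\<forall>x\<in>orth_sl_sum n K. from_skew_first n (to_skew_first n x) = x"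
      using orth_sl_sum_supported
      by (auto simp: from_skew_first_def to_skew_first_def from_skew_to_skew fun_eq_iff)
    show "\<forall>y\<in>so_sl_sum n K. to_skew_first n (from_skew_first n y) = y"
    proof
      fix y assume "y \<in> so_sl_sum n K"
      then have "mat_supported (2*n) (y 1)" unfolding so_sl_sum_def mat_supported_def by blast
      then show "to_skew_first n (from_skew_first n y) = y"
        by (auto simp: from_skew_first_def to_skew_first_def to_skew_from_skew fun_eq_iff)
    qed
  qed (use to_skew_first_mem from_skew_first_mem K in auto)
next
  fix x y assume x: "x \<in> orth_sl_sum n K" and y: "y \<in> orth_sl_sum n K"
  show "to_skew_first n (tadd x y) = tadd (to_skew_first n x) (to_skew_first n y)"
    by (rule ext) (simp add: to_skew_first_def tadd_apply to_skew_add)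
  show "to_skew_first n (lie_br (2*n) x y) = lie_br (2*n) (to_skew_first n x) (to_skew_first n y)"
    using orth_sl_sum_supported[OF x] orth_sl_sum_supported[OF y]
    by (intro ext) (simp add: to_skew_first_def lie_br_apply to_skew_br)
next
  fix x c
  show "to_skew_first n (tsmul c x) = tsmul c (to_skew_first n x)"
    by (rule ext) (simp add: to_skew_first_def tsmul_apply to_skew_scale)
qed

theorem lemma5p4:
  fixes n K :: nat and a :: "nat \<Rightarrow> complex"
  assumes "n \<ge> 3" and "K \<ge> 1"
    and "\<forall>k\<in>{1..K}. a k \<noteq> 0"
    and "\<forall>k\<in>{1..K}. \<forall>j\<in>{1..K}. k \<noteq> j \<longrightarrow> a k \<noteq> a j \<and> a k \<noteq> inverse (a j)"
    and "a 1 = -1"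
    and "\<forall>k\<in>{2..K}. a k \<noteq> 1"
  shows "lie_iso (2*n) (psi_image n K a) (so_sl_sum n K)"
proof -
  interpret psi_image_setting n K a using assms by unfold_locales
  show ?thesis using lie_iso_orth_sl_sum_so_sl_sum[OF \<open>K \<ge> 1\<close>] psi_image_eq_orth_sl_sum by simp
qed

end
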